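(* Let $f:\mathbb{R}^n\to\{\pm1\}$ be a Borel-measurable function. For each $\rho\in[0,1]$ and each $d\in\mathbb{N}$, there is a polynomial $p:\mathbb{R}^n\to\mathbb{R}$ of degree at most $d$ such that $$\mathbb{E}_{x\sim\mathcal{N}(0,I_n)}\big[|f(x)-p(x)|\big]\le 2\,\mathrm{GNS}_{1-\rho}(f)+\rho^{d+1}.$$
   Context: For $\delta\in[0,1]$, the Gaussian noise sensitivity of $f:\mathbb{R}^n\to\{\pm1\}$ is $\mathrm{GNS}_\delta(f)=\mathbb{P}[f(X)\ne f(Y)]$, where $(X,Y)$ is a pair of $(1-\delta)$-correlated standard Gaussians, i.e. $(X,Y)\sim\mathcal{N}\!\left(0,\begin{pmatrix}I_n&(1-\delta)I_n\\(1-\delta)I_n&I_n\end{pmatrix}\right)$. The convention $0^{d+1}=0$ is used. *)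

theory Defs
  imports "HOL-Analysis.Analysis" "HOL-Probability.Probability"
begin

definition std_gaussian :: "(real ^ 'n) measure" where
  "std_gaussian = density lborel (\<lambda>x. ennreal (\<Prod>i\<in>UNIV. std_normal_density (x $ i)))"

text \<open>Law of a pair (X,Y) of r-correlated standard Gaussians on R^n (0 <= r <= 1):
  realised as X and Y = r X + sqrt(1 - r^2) Z with X, Z independent standard Gaussians;
  its covariance is [[I, r I],[r I, I]].\<close>
definition corr_gaussian_pair :: "real \<Rightarrow> ((real ^ 'n) \<times> (real ^ 'n)) measure" where
  "corr_gaussian_pair r =
     distr (std_gaussian \<Otimes>\<^sub>M std_gaussian) (borel \<Otimes>\<^sub>M borel)
       (\<lambda>(x, z). (x, r *\<^sub>R x + sqrt (1 - r\<^sup>2) *\<^sub>R z))"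

definition GNS :: "real \<Rightarrow> (real ^ 'n \<Rightarrow> real) \<Rightarrow> real" where
  "GNS \<delta> f = measure (corr_gaussian_pair (1 - \<delta>)) {(x, y). f x \<noteq> f y}"

definition poly_deg_le :: "nat \<Rightarrow> (real ^ 'n \<Rightarrow> real) \<Rightarrow> bool" where
  "poly_deg_le d p \<longleftrightarrow>
     (\<exists>A c. finite (A :: ('n \<Rightarrow> nat) set) \<and> (\<forall>\<alpha>\<in>A. (\<Sum>i\<in>UNIV. \<alpha> i) \<le> d) \<and>
        (\<forall>x. p x = (\<Sum>\<alpha>\<in>A. c \<alpha> * (\<Prod>i\<in>UNIV. (x $ i) ^ (\<alpha> i)))))"

end

theory Submission
  imports Defs "HOL-Computational_Algebra.Polynomial"
begin

text \<open>Write \<open>T\<close> for the Ornstein-Uhlenbeck operator \<open>(T f)(x) = E f(\<rho> x + sqrt(1 - \<rho>^2) Z)\<close>.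
  Pointwise \<open>|f x - (T f) x| \<le> E |f x - f(\<rho> x + sqrt(1 - \<rho>^2) Z)|\<close>, and integrating over \<open>x\<close> gives
  \<open>E |f - T f| \<le> 2 GNS_{1-\<rho>}(f)\<close>. The Hermite coefficients of \<open>T f\<close> are \<open>\<rho>^|\<alpha>| c_\<alpha>\<close>, where the
  \<open>c_\<alpha>\<close> are those of \<open>f\<close> and satisfy Bessel's inequality \<open>\<Sum> c_\<alpha>^2 \<le> E f^2 = 1\<close>; so the
  truncation \<open>p\<close> of this series to degree \<open>d\<close> has \<open>E |T f - p| \<le> \<parallel>T f - p\<parallel>\<^sub>2 \<le> \<rho>^(d+1)\<close>.

  That \<open>T f\<close> is the \<open>L\<^sup>2\<close> limit of its
  Hermite series truncated to boxes \<open>{\<alpha>. \<forall>i. \<alpha> i \<le> N}\<close> follows from Cauchy-Schwarz against the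
  Mehler kernel \<open>K\<close> of \<open>T\<close> and its truncated Mehler expansion \<open>S\<^sub>N\<close>: both are products of
  one-dimensional Gaussian integrals, which give \<open>E\<^sub>x E\<^sub>y (K - S\<^sub>N)\<^sup>2 =
  (1 - \<rho>^2)^-n - (\<Sum>k\<le>N. \<rho>^2k)^n \<longrightarrow> 0\<close>. Gaussian integrals of polynomials are computed
  algebraically from the moments via Stein's identity \<open>E[Z p(Z)] = E[p'(Z)]\<close>.\<close>

section \<open>Gaussian expectation of polynomials and Hermite polynomials\<close>

definition gauss_moment :: "nat \<Rightarrow> real" where
  "gauss_moment j = (if even j then fact j / (2 ^ (j div 2) * fact (j div 2)) else 0)"

lemma gauss_moment_0 [simp]: "gauss_moment 0 = 1"
  and gauss_moment_1 [simp]: "gauss_moment (Suc 0) = 0"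
  by (auto simp: gauss_moment_def)

lemma gauss_moment_Suc_Suc: "gauss_moment (Suc (Suc j)) = real (Suc j) * gauss_moment j"
proof (cases "even j")
  case True
  then obtain k where k: "j = 2 * k" by blast
  have "Suc (Suc j) = 2 * Suc k" using k by simp
  have d: "(2::real) ^ Suc k * (real (k + 1) * fact k) = real (2 * k + 2) * (2 ^ k * fact k)"
    by (simp add: algebra_simps)
  have "gauss_moment (Suc (Suc j)) = fact (2 * Suc k) / (2 ^ Suc k * fact (Suc k))"
    using \<open>Suc (Suc j) = 2 * Suc k\<close> by (simp add: gauss_moment_def)
  also have "\<dots> = real (2 * k + 2) * (real (2 * k + 1) * fact (2 * k)) / (real (2 * k + 2) * (2 ^ k * fact k))"
    unfolding d[symmetric] by (simp add: fact_Suc algebra_simps)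
  also have "\<dots> = real (Suc j) * (fact (2 * k) / (2 ^ k * fact k))"
    using k by (subst mult_divide_mult_cancel_left) simp_all
  finally show ?thesis
    using k by (simp add: gauss_moment_def)
qed (simp add: gauss_moment_def)

text \<open>The expectation \<open>E p(Z)\<close> for \<open>Z\<close> standard normal, computed from the moments.\<close>
definition gauss_mean :: "real poly \<Rightarrow> real" where
  "gauss_mean p = (\<Sum>i\<le>degree p. coeff p i * gauss_moment i)"

lemma gauss_mean_eq_sum:
  assumes "degree p \<le> D"
  shows "gauss_mean p = (\<Sum>i\<le>D. coeff p i * gauss_moment i)"
proof -
  have "(\<Sum>i\<le>D. coeff p i * gauss_moment i) = (\<Sum>i\<le>degree p. coeff p i * gauss_moment i)"
    by (rule sum.mono_neutral_right) (use assms in \<open>auto simp: coeff_eq_0\<close>)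
  then show ?thesis by (simp add: gauss_mean_def)
qed

lemma gauss_mean_add: "gauss_mean (p + q) = gauss_mean p + gauss_mean q"
  using degree_add_le_max[of p q]
  by (simp add: gauss_mean_eq_sum[of _ "max (degree p) (degree q)"] sum.distrib algebra_simps)

lemma gauss_mean_smult: "gauss_mean (smult a p) = a * gauss_mean p"
  by (simp add: gauss_mean_eq_sum[of "smult a p" "degree p"] gauss_mean_def sum_distrib_left
      algebra_simps)

lemma gauss_mean_diff: "gauss_mean (p - q) = gauss_mean p - gauss_mean q"
  using gauss_mean_add[of "p - q" q] by simp

lemma gauss_mean_const [simp]: "gauss_mean [:c:] = c"
  and gauss_mean_0 [simp]: "gauss_mean 0 = 0"
  and gauss_mean_1 [simp]: "gauss_mean 1 = 1"
  by (simp_all add: gauss_mean_def)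

lemma gauss_mean_linear: "gauss_mean [:a, b:] = a"
  by (simp add: gauss_mean_eq_sum[of _ 1])

text \<open>Stein's identity \<open>E[Z p(Z)] = E[p'(Z)]\<close>; it is the moment recursion \<open>gauss_moment_Suc_Suc\<close>.\<close>
lemma gauss_mean_pCons_0: "gauss_mean (pCons 0 p) = gauss_mean (pderiv p)"
proof -
  let ?D = "degree p"
  have "gauss_mean (pCons 0 p) = (\<Sum>i\<le>Suc ?D. coeff (pCons 0 p) i * gauss_moment i)"
    by (rule gauss_mean_eq_sum) (simp add: degree_pCons_le)
  also have "\<dots> = (\<Sum>i\<le>?D. coeff p i * gauss_moment (Suc i))"
    by (subst sum.atMost_Suc_shift) simp
  also have "\<dots> = (\<Sum>i\<le>?D. real (Suc i) * coeff p (Suc i) * gauss_moment i)"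
  proof -
    have "(\<Sum>i\<le>Suc ?D. coeff p i * gauss_moment (Suc i))
        = (\<Sum>i\<le>?D. coeff p (Suc i) * gauss_moment (Suc (Suc i))) + coeff p 0 * gauss_moment 1"
      by (subst sum.atMost_Suc_shift) simp
    then show ?thesis
      by (simp add: gauss_moment_Suc_Suc coeff_eq_0 algebra_simps)
  qed
  also have "\<dots> = gauss_mean (pderiv p)"
    by (simp add: gauss_mean_eq_sum[of "pderiv p" ?D] degree_pderiv coeff_pderiv)
  finally show ?thesis .
qed

fun hermite :: "nat \<Rightarrow> real poly" where
  "hermite 0 = 1"
| "hermite (Suc 0) = [:0, 1:]"
| "hermite (Suc (Suc k)) = pCons 0 (hermite (Suc k)) - smult (real (Suc k)) (hermite k)"

lemma degree_hermite: "degree (hermite k) \<le> k"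
proof (induction k rule: hermite.induct)
  case (3 k)
  have "degree (pCons 0 (hermite (Suc k))) \<le> Suc (Suc k)"
    using "3.IH"(1) degree_pCons_le[of 0 "hermite (Suc k)"] by simp
  moreover have "degree (smult (real (Suc k)) (hermite k)) \<le> Suc (Suc k)"
    using "3.IH"(2) degree_smult_le[of "real (Suc k)" "hermite k"] by simp
  ultimately show ?case
    by (simp only: hermite.simps) (rule order_trans[OF degree_diff_le_max], simp)
qed simp_all

lemma pderiv_hermite: "pderiv (hermite (Suc k)) = smult (real (Suc k)) (hermite k)"
proof (induction k rule: hermite.induct)
  case (3 k)
  have "pderiv (hermite (Suc (Suc (Suc k))))
      = hermite (Suc (Suc k)) + pCons 0 (pderiv (hermite (Suc (Suc k))))
        - smult (real (Suc (Suc k))) (pderiv (hermite (Suc k)))"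
    by (simp only: hermite.simps pderiv_diff pderiv_smult pderiv_pCons)
  also have "\<dots> = hermite (Suc (Suc k)) + smult (real (Suc (Suc k)))
      (pCons 0 (hermite (Suc k)) - smult (real (Suc k)) (hermite k))"
    by (simp only: "3.IH" smult_diff_right smult_smult smult_pCons mult.commute mult_zero_left
        add_diff_eq)
  also have "\<dots> = smult (real (Suc (Suc (Suc k)))) (hermite (Suc (Suc k)))"
    by (simp only: hermite.simps[symmetric] smult_add_left of_nat_Suc[of "Suc (Suc k)"] smult_1_left add.commute)
  finally show ?case .
qed (simp_all add: pderiv_pCons pderiv_diff pderiv_smult)

lemma hermite_Suc: "hermite (Suc k) = pCons 0 (hermite k) - pderiv (hermite k)"
  by (cases k) (simp_all add: pderiv_hermite)

lemma gauss_mean_hermite_mult: "gauss_mean (hermite k * q) = gauss_mean ((pderiv ^^ k) q)"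
proof (induction k arbitrary: q)
  case (Suc k)
  have "hermite (Suc k) * q = pCons 0 (hermite k * q) - pderiv (hermite k) * q"
    by (simp add: hermite_Suc algebra_simps)
  then have "gauss_mean (hermite (Suc k) * q)
      = gauss_mean (pderiv (hermite k * q)) - gauss_mean (pderiv (hermite k) * q)"
    by (simp add: gauss_mean_diff gauss_mean_pCons_0)
  also have "\<dots> = gauss_mean (hermite k * pderiv q)"
    by (simp add: pderiv_mult gauss_mean_add algebra_simps)
  also have "\<dots> = gauss_mean ((pderiv ^^ Suc k) q)"
    using Suc.IH[of "pderiv q"] by (simp only: funpow_Suc_right comp_apply)
  finally show ?case .
qed simp

lemma higher_pderiv_hermite:
  "(pderiv ^^ m) (hermite j) =
     (if m \<le> j then smult (fact j / fact (j - m)) (hermite (j - m)) else 0)"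
proof (induction m)
  case (Suc m)
  show ?case
  proof (cases "Suc m \<le> j")
    case True
    then obtain i where i: "j - m = Suc i"
      by (metis Suc_diff_le Suc_le_D diff_Suc_Suc)
    have "(pderiv ^^ Suc m) (hermite j) = smult (fact j / fact (j - m) * real (Suc i)) (hermite i)"
      using Suc True i by (simp add: pderiv_smult pderiv_hermite)
    also have "fact j / fact (j - m) * real (Suc i) = (fact j / fact i :: real)"
    proof -
      have "fact (j - m) = real (Suc i) * (fact i :: real)"
        using i by (simp del: of_nat_Suc)
      then show ?thesis
        by (simp del: of_nat_Suc)
    qed
    finally show ?thesis
      using True i by (simp add: diff_Suc)
  next
    case False
    then show ?thesis
      using Suc by (cases "m = j") (auto simp: pderiv_smult)
  qed
qed simp

lemma gauss_mean_hermite: "gauss_mean (hermite m) = (if m = 0 then 1 else 0)"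
proof (cases m)
  case (Suc k)
  have "(pderiv ^^ Suc k) (1 :: real poly) = 0"
    by (induction k) auto
  then have "gauss_mean (hermite m * 1) = 0"
    unfolding gauss_mean_hermite_mult Suc by simp
  then show ?thesis
    using Suc by simp
qed simp

lemma gauss_mean_hermite_mult_hermite:
  "gauss_mean (hermite j * hermite k) = (if j = k then fact k else 0)"
proof -
  have "gauss_mean (hermite j * hermite k) = gauss_mean ((pderiv ^^ k) (hermite j))"
    by (subst mult.commute) (rule gauss_mean_hermite_mult)
  then show ?thesis
    by (auto simp: higher_pderiv_hermite gauss_mean_smult gauss_mean_hermite)
qed

text \<open>Both sides satisfy the three-term recursion of the Hermite polynomials.\<close>
lemma gauss_mean_hermite_pcompose:
  fixes \<rho> s x :: real
  assumes s2: "s^2 = 1 - \<rho>^2"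
  shows "gauss_mean (pcompose (hermite k) [:\<rho> * x, s:]) = \<rho> ^ k * poly (hermite k) x"
proof -
  let ?q = "[:\<rho> * x, s:]"
  define u where "u k = gauss_mean (pcompose (hermite k) ?q)" for k
  have step: "u (Suc (Suc k)) = \<rho> * x * u (Suc k) - \<rho>^2 * real (Suc k) * u k" for k
  proof -
    let ?H = "pcompose (hermite (Suc k)) ?q"
    have e: "pcompose (hermite (Suc (Suc k))) ?q
        = smult (\<rho> * x) ?H + pCons 0 (smult s ?H) - smult (real (Suc k)) (pcompose (hermite k) ?q)"
      by (simp add: pcompose_diff pcompose_smult pcompose_pCons)
    have "pderiv ?H = smult (s * real (Suc k)) (pcompose (hermite k) ?q)"
      by (simp add: pderiv_pcompose pderiv_hermite pderiv_pCons pcompose_smult)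
    then have "gauss_mean (pCons 0 (smult s ?H)) = s^2 * real (Suc k) * u k"
      by (simp add: gauss_mean_pCons_0 pderiv_smult gauss_mean_smult u_def power2_eq_square)
    then show ?thesis
      unfolding u_def e by (simp add: gauss_mean_add gauss_mean_diff gauss_mean_smult s2 u_def
          algebra_simps)
  qed
  have "u k = \<rho> ^ k * poly (hermite k) x \<and> u (Suc k) = \<rho> ^ Suc k * poly (hermite (Suc k)) x"
  proof (induction k)
    case 0
    show ?case by (simp add: u_def pcompose_1 pcompose_pCons gauss_mean_linear)
  next
    case (Suc k)
    then show ?case
      by (simp add: step) (simp add: algebra_simps power2_eq_square)
  qed
  then show ?thesis by (simp add: u_def)
qed

section \<open>The standard normal distribution on the real line\<close>

lemma prob_space_std_normal: "prob_space std_normal_distribution"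
  by (rule prob_space_normal_density) simp

lemma integrable_std_normal_iff:
  assumes [measurable]: "f \<in> borel_measurable borel"
  shows "integrable std_normal_distribution f \<longleftrightarrow> integrable lborel (\<lambda>x. std_normal_density x * f x)"
  by (subst integrable_density) (auto simp: normal_density_nonneg)

lemma integral_std_normal:
  assumes [measurable]: "f \<in> borel_measurable borel"
  shows "integral\<^sup>L std_normal_distribution f = (\<integral>x. std_normal_density x * f x \<partial>lborel)"
  by (subst integral_density) (auto simp: normal_density_nonneg)

lemma integral_std_normal_power: "(\<integral>x. x ^ i \<partial>std_normal_distribution) = gauss_moment i"
proof -
  have "(\<integral>x. x ^ i \<partial>std_normal_distribution) = (\<integral>x. std_normal_density x * x ^ i \<partial>lborel)"
    by (rule integral_std_normal) simp
  also have "\<dots> = gauss_moment i"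
  proof (cases "even i")
    case True
    then obtain k where "i = 2 * k" by blast
    then show ?thesis using integral_std_normal_moment_even[of k] by (simp add: gauss_moment_def)
  next
    case False
    then obtain k where "i = 2 * k + 1" using oddE by blast
    then show ?thesis using integral_std_normal_moment_odd[of k] by (simp add: gauss_moment_def)
  qed
  finally show ?thesis .
qed

lemma borel_measurable_poly [measurable]: "(\<lambda>t. poly (p :: real poly) t) \<in> borel_measurable borel"
  by (intro borel_measurable_continuous_onI) (auto intro: continuous_intros)

lemma integrable_std_normal_poly: "integrable std_normal_distribution (\<lambda>t. poly p t)"
  unfolding poly_altdef
  by (intro Bochner_Integration.integrable_sum integrable_mult_right
      integrable_std_normal_distribution_moment)

lemma integral_std_normal_poly: "(\<integral>t. poly p t \<partial>std_normal_distribution) = gauss_mean p"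
  unfolding poly_altdef
  by (simp add: Bochner_Integration.integral_sum integrable_std_normal_distribution_moment
      integral_std_normal_power gauss_mean_def)

lemma distr_std_normal_affine:
  assumes "0 < s"
  shows "distr std_normal_distribution lborel (\<lambda>t. a + s * t) = density lborel (normal_density a s)"
proof -
  interpret prob_space std_normal_distribution by (rule prob_space_std_normal)
  have "distributed std_normal_distribution lborel (\<lambda>x. x) std_normal_density"
    unfolding distributed_def by (auto simp: distr_id2 normal_density_nonneg)
  from normal_density_affine[OF this, of s a] have
    "distributed std_normal_distribution lborel (\<lambda>x. a + s * x) (normal_density a s)"
    using assms by simp
  then show ?thesis by (simp add: distributed_def)
qed

definition hermite_fun :: "nat \<Rightarrow> real \<Rightarrow> real" where
  "hermite_fun k t = poly (hermite k) t / sqrt (fact k)"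

lemma hermite_fun_measurable [measurable]: "hermite_fun k \<in> borel_measurable borel"
  unfolding hermite_fun_def by measurable

lemma hermite_fun_eq_poly: "hermite_fun k t = poly (smult (1 / sqrt (fact k)) (hermite k)) t"
  by (simp add: hermite_fun_def)

lemma hermite_fun_mult_eq_poly:
  "hermite_fun j t * hermite_fun k t =
     poly (smult (1 / (sqrt (fact j) * sqrt (fact k))) (hermite j * hermite k)) t"
  by (simp add: hermite_fun_def)

lemma integrable_hermite_fun: "integrable std_normal_distribution (hermite_fun k)"
  unfolding hermite_fun_eq_poly by (rule integrable_std_normal_poly)

lemma integrable_hermite_fun_mult:
  "integrable std_normal_distribution (\<lambda>t. hermite_fun j t * hermite_fun k t)"
  unfolding hermite_fun_mult_eq_poly by (rule integrable_std_normal_poly)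

lemma hermite_fun_orthonormal:
  "(\<integral>t. hermite_fun j t * hermite_fun k t \<partial>std_normal_distribution) = (if j = k then 1 else 0)"
  unfolding hermite_fun_mult_eq_poly integral_std_normal_poly gauss_mean_smult
  by (simp add: gauss_mean_hermite_mult_hermite real_sqrt_mult[symmetric])

section \<open>The one-dimensional Mehler kernel\<close>

lemma normal_density_eq:
  "0 < \<sigma> \<Longrightarrow> normal_density \<mu> \<sigma> y = exp (-(y - \<mu>)\<^sup>2 / (2 * \<sigma>\<^sup>2)) / (sqrt (2 * pi) * \<sigma>)"
  unfolding normal_density_def by (simp add: real_sqrt_mult)

lemma std_normal_density_eq: "std_normal_density y = exp (-y\<^sup>2 / 2) / sqrt (2 * pi)"
  using normal_density_eq[of 1 0 y] by simp

lemma std_normal_density_neq_0 [simp]: "std_normal_density y \<noteq> 0"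
  using normal_density_pos[of 1 0 y] by simp

locale mehler =
  fixes r :: real
  assumes r_nonneg: "0 \<le> r" and r_less_1: "r < 1"
begin

definition s :: real where "s = sqrt (1 - r\<^sup>2)"

lemma r_sq_less_1: "r\<^sup>2 < 1"
  using r_nonneg r_less_1 by (metis abs_of_nonneg abs_square_less_1)

lemma s_pos: "0 < s"
  using r_sq_less_1 by (simp add: s_def)

lemma s_sq: "s\<^sup>2 = 1 - r\<^sup>2"
  using r_sq_less_1 by (simp add: s_def)

text \<open>The density of \<open>r x + s Z\<close> with respect to \<open>N(0,1)\<close>: the kernel of the Ornstein-Uhlenbeck
  operator, \<open>(T g)(x) = \<integral> kern x y * g y \<partial>N(0,1)\<close>.\<close>
definition kern :: "real \<Rightarrow> real \<Rightarrow> real" where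
  "kern x y = normal_density (r * x) s y / std_normal_density y"

lemma kern_nonneg: "0 \<le> kern x y"
  by (simp add: kern_def normal_density_nonneg)

lemma kern_measurable [measurable]: "kern x \<in> borel_measurable borel"
  unfolding kern_def normal_density_def by measurable

lemma density_kern:
  "density std_normal_distribution (kern x) = distr std_normal_distribution lborel (\<lambda>t. r * x + s * t)"
proof -
  have "density std_normal_distribution (kern x) =
      density lborel (\<lambda>y. ennreal (std_normal_density y) * ennreal (kern x y))"
    by (rule density_density_eq) (auto simp: normal_density_nonneg)
  also have "\<dots> = density lborel (normal_density (r * x) s)"
    by (intro density_cong) (auto simp: kern_def ennreal_mult'[symmetric] normal_density_pos)
  also have "\<dots> = distr std_normal_distribution lborel (\<lambda>t. r * x + s * t)"
    by (rule distr_std_normal_affine[symmetric]) (rule s_pos)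
  finally show ?thesis .
qed

lemma integrable_kern_mult_iff:
  assumes [measurable]: "g \<in> borel_measurable borel"
  shows "integrable std_normal_distribution (\<lambda>y. kern x y * g y) \<longleftrightarrow>
    integrable std_normal_distribution (\<lambda>t. g (r * x + s * t))"
proof -
  have "integrable std_normal_distribution (\<lambda>y. kern x y * g y) \<longleftrightarrow>
      integrable (density std_normal_distribution (kern x)) g"
    by (subst integrable_density) (auto simp: kern_nonneg)
  also have "\<dots> \<longleftrightarrow> integrable std_normal_distribution (\<lambda>t. g (r * x + s * t))"
    unfolding density_kern by (subst integrable_distr_eq) auto
  finally show ?thesis .
qed

lemma integral_kern_mult:
  assumes [measurable]: "g \<in> borel_measurable borel"
  shows "(\<integral>y. kern x y * g y \<partial>std_normal_distribution) =
    (\<integral>t. g (r * x + s * t) \<partial>std_normal_distribution)"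
proof -
  have "(\<integral>y. kern x y * g y \<partial>std_normal_distribution) =
      integral\<^sup>L (density std_normal_distribution (kern x)) g"
    by (subst integral_density) (auto simp: kern_nonneg)
  also have "\<dots> = (\<integral>t. g (r * x + s * t) \<partial>std_normal_distribution)"
    unfolding density_kern by (subst integral_distr) auto
  finally show ?thesis .
qed

lemma hermite_fun_affine:
  "hermite_fun k (r * x + s * t) = poly (smult (1 / sqrt (fact k)) (pcompose (hermite k) [:r * x, s:])) t"
  by (simp add: hermite_fun_def poly_pcompose ac_simps)

lemma integrable_kern_mult_hermite_fun:
  "integrable std_normal_distribution (\<lambda>y. kern x y * hermite_fun k y)"
  by (subst integrable_kern_mult_iff) (auto simp: hermite_fun_affine integrable_std_normal_poly)

lemma integral_kern_mult_hermite_fun: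
  "(\<integral>y. kern x y * hermite_fun k y \<partial>std_normal_distribution) = r ^ k * hermite_fun k x"
proof -
  have "(\<integral>y. kern x y * hermite_fun k y \<partial>std_normal_distribution) =
      gauss_mean (smult (1 / sqrt (fact k)) (pcompose (hermite k) [:r * x, s:]))"
    by (subst integral_kern_mult) (auto simp: hermite_fun_affine integral_std_normal_poly gauss_mean_smult)
  also have "\<dots> = r ^ k * hermite_fun k x"
    by (simp add: gauss_mean_smult gauss_mean_hermite_pcompose[OF s_sq] hermite_fun_def)
  finally show ?thesis .
qed

definition kern_sq_int :: "real \<Rightarrow> real" where
  "kern_sq_int x = exp (r\<^sup>2 * x\<^sup>2 / (1 + r\<^sup>2)) / (s * sqrt (1 + r\<^sup>2))"

lemma kern_sq_int_measurable [measurable]: "kern_sq_int \<in> borel_measurable borel"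
  unfolding kern_sq_int_def by measurable

lemma exponent_kern_sq:
  "-(y - r * x)\<^sup>2 / s\<^sup>2 + y\<^sup>2 / 2 =
     r\<^sup>2 * x\<^sup>2 / (1 + r\<^sup>2) + -(y - 2 * r * x / (1 + r\<^sup>2))\<^sup>2 / (2 * (s / sqrt (1 + r\<^sup>2))\<^sup>2)"
proof -
  define a where "a = 1 - r\<^sup>2"
  define b where "b = 1 + r\<^sup>2"
  have a: "a \<noteq> 0" using r_sq_less_1 by (simp add: a_def)
  have b: "b > 0" by (simp add: b_def add_pos_nonneg)
  have sig: "(s / sqrt (1 + r\<^sup>2))\<^sup>2 = a / b"
    by (simp add: power_divide s_sq a_def b_def add_pos_nonneg)
  have "-(y - r * x)\<^sup>2 / a + y\<^sup>2 / 2 = (-2 * b * (y - r * x)\<^sup>2 + a * b * y\<^sup>2) / (2 * a * b)"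
    using a b by (simp add: field_simps)
  also have "-2 * b * (y - r * x)\<^sup>2 + a * b * y\<^sup>2 = 2 * a * r\<^sup>2 * x\<^sup>2 - (b * y - 2 * r * x)\<^sup>2"
    unfolding a_def b_def by (simp add: algebra_simps power2_eq_square)
  also have "(2 * a * r\<^sup>2 * x\<^sup>2 - (b * y - 2 * r * x)\<^sup>2) / (2 * a * b) =
      r\<^sup>2 * x\<^sup>2 / b + -(y - 2 * r * x / b)\<^sup>2 / (2 * (a / b))"
    using a b by (simp add: field_simps power2_eq_square)
  finally show ?thesis
    unfolding sig s_sq by (simp add: a_def b_def)
qed

lemma std_normal_density_mult_kern_sq:
  "std_normal_density y * (kern x y)\<^sup>2 =
     kern_sq_int x * normal_density (2 * r * x / (1 + r\<^sup>2)) (s / sqrt (1 + r\<^sup>2)) y"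
proof -
  let ?m = "2 * r * x / (1 + r\<^sup>2)" and ?\<sigma> = "s / sqrt (1 + r\<^sup>2)"
  define c where "c = sqrt (2 * pi)"
  define A where "A = exp (-(y - r * x)\<^sup>2 / s\<^sup>2)"
  define B where "B = exp (-y\<^sup>2 / 2)"
  have c: "0 < c" by (simp add: c_def)
  have q: "0 < sqrt (1 + r\<^sup>2)" by (simp add: add_pos_nonneg)
  have "(exp (-(y - r * x)\<^sup>2 / (2 * s\<^sup>2)))\<^sup>2 = A"
    unfolding A_def power2_eq_square[of "exp _"] exp_add[symmetric] by simp
  then have e1: "(normal_density (r * x) s y)\<^sup>2 = A / (c\<^sup>2 * s\<^sup>2)"
    using s_pos by (simp add: normal_density_eq c_def[symmetric] power_divide power_mult_distrib)
  have e2: "std_normal_density y = B / c"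
    by (simp add: std_normal_density_eq B_def c_def)
  have e3: "exp (-(y - r * x)\<^sup>2 / s\<^sup>2 + y\<^sup>2 / 2) = A / B"
    unfolding A_def B_def by (simp add: exp_diff[symmetric])
  have "std_normal_density y * (kern x y)\<^sup>2 = (normal_density (r * x) s y)\<^sup>2 / std_normal_density y"
    by (simp add: kern_def power2_eq_square)
  also have "\<dots> = exp (-(y - r * x)\<^sup>2 / s\<^sup>2 + y\<^sup>2 / 2) / (c * s\<^sup>2)"
    unfolding e1 e2 e3 using c s_pos by (simp add: B_def field_simps power2_eq_square)
  also have "\<dots> = kern_sq_int x * normal_density ?m ?\<sigma> y"
  proof -
    have gen: "\<And>a b q. 0 < q \<Longrightarrow> a * b / (c * s\<^sup>2) = a / (s * q) * (b / (c * (s / q)))"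
      using s_pos c by (simp add: field_simps power2_eq_square)
    show ?thesis
      unfolding exponent_kern_sq exp_add normal_density_eq[OF divide_pos_pos[OF s_pos q]]
        kern_sq_int_def c_def[symmetric]
      by (rule gen) (rule q)
  qed
  finally show ?thesis .
qed

lemma integrable_kern_sq: "integrable std_normal_distribution (\<lambda>y. (kern x y)\<^sup>2)"
  using s_pos
  by (subst integrable_std_normal_iff)
     (auto simp: std_normal_density_mult_kern_sq add_pos_nonneg
       intro!: integrable_mult_right integrable_normal_density)

lemma integral_kern_sq: "(\<integral>y. (kern x y)\<^sup>2 \<partial>std_normal_distribution) = kern_sq_int x"
  using s_pos
  by (subst integral_std_normal)
     (auto simp: std_normal_density_mult_kern_sq integral_normal_density add_pos_nonneg)

lemma std_normal_density_mult_kern_sq_int: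
  "std_normal_density x * kern_sq_int x = (1 / s\<^sup>2) * normal_density 0 (sqrt (1 + r\<^sup>2) / s) x"
proof -
  define q where "q = sqrt (1 + r\<^sup>2)"
  have q: "0 < q" by (simp add: q_def add_pos_nonneg)
  have q2: "q\<^sup>2 = 1 + r\<^sup>2" by (simp add: q_def add_pos_nonneg)
  have ex: "-x\<^sup>2 / 2 + r\<^sup>2 * x\<^sup>2 / (1 + r\<^sup>2) = -(x - 0)\<^sup>2 / (2 * (q / s)\<^sup>2)"
  proof -
    have "1 + r\<^sup>2 \<noteq> 0" using zero_le_power2[of r] by linarith
    then show ?thesis unfolding power_divide q2 s_sq by (simp add: field_simps)
  qed
  have "std_normal_density x * kern_sq_int x =
      exp (-x\<^sup>2 / 2) * exp (r\<^sup>2 * x\<^sup>2 / (1 + r\<^sup>2)) / (sqrt (2 * pi) * (s * q))"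
    by (simp add: std_normal_density_eq kern_sq_int_def q_def)
  also have "\<dots> = exp (-(x - 0)\<^sup>2 / (2 * (q / s)\<^sup>2)) / (sqrt (2 * pi) * (s * q))"
    unfolding exp_add[symmetric] ex ..
  also have "\<dots> = (1 / s\<^sup>2) * normal_density 0 (q / s) x"
    unfolding normal_density_eq[OF divide_pos_pos[OF q s_pos]]
    using s_pos q by (simp add: field_simps power2_eq_square)
  finally show ?thesis by (simp add: q_def)
qed

lemma integrable_kern_sq_int: "integrable std_normal_distribution kern_sq_int"
  using s_pos
  by (subst integrable_std_normal_iff)
     (auto simp: std_normal_density_mult_kern_sq_int add_pos_nonneg
       intro!: integrable_mult_right integrable_normal_density)

lemma integral_kern_sq_int: "(\<integral>x. kern_sq_int x \<partial>std_normal_distribution) = 1 / (1 - r\<^sup>2)"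
  using s_pos
  by (subst integral_std_normal)
     (auto simp: std_normal_density_mult_kern_sq_int s_sq integral_normal_density add_pos_nonneg)

text \<open>Partial sums of Mehler's formula \<open>kern x y = (\<Sum>k. r^k h\<^sub>k(x) h\<^sub>k(y))\<close>.\<close>
definition kern_partial :: "nat \<Rightarrow> real \<Rightarrow> real \<Rightarrow> real" where
  "kern_partial n x y = (\<Sum>k\<le>n. r ^ k * hermite_fun k x * hermite_fun k y)"

definition kern_partial_sq_int :: "nat \<Rightarrow> real \<Rightarrow> real" where
  "kern_partial_sq_int n x = (\<Sum>k\<le>n. (r ^ k * hermite_fun k x)\<^sup>2)"

lemma kern_partial_measurable [measurable]: "kern_partial n x \<in> borel_measurable borel"
  unfolding kern_partial_def by measurable

lemma kern_partial_sq_int_measurable [measurable]: "kern_partial_sq_int n \<in> borel_measurable borel"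
  unfolding kern_partial_sq_int_def by measurable

lemma integrable_kern_mult_kern_partial:
  "integrable std_normal_distribution (\<lambda>y. kern x y * kern_partial n x y)"
  unfolding kern_partial_def sum_distrib_left
  by (intro Bochner_Integration.integrable_sum)
     (simp add: mult.left_commute[of "kern x _"] integrable_kern_mult_hermite_fun)

lemma integral_kern_mult_kern_partial:
  "(\<integral>y. kern x y * kern_partial n x y \<partial>std_normal_distribution) = kern_partial_sq_int n x"
  unfolding kern_partial_def sum_distrib_left kern_partial_sq_int_def
  by (simp add: mult.left_commute[of "kern x _"] Bochner_Integration.integral_sum
      integrable_kern_mult_hermite_fun integral_kern_mult_hermite_fun power2_eq_square)

lemma kern_partial_sq:
  "(kern_partial n x y)\<^sup>2 = (\<Sum>j\<le>n. \<Sum>k\<le>n.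
     (r ^ j * hermite_fun j x * r ^ k * hermite_fun k x) * (hermite_fun j y * hermite_fun k y))"
  unfolding kern_partial_def power2_eq_square sum_product by (simp add: ac_simps)

lemma integrable_kern_partial_sq: "integrable std_normal_distribution (\<lambda>y. (kern_partial n x y)\<^sup>2)"
  unfolding kern_partial_sq
  by (intro Bochner_Integration.integrable_sum integrable_mult_right integrable_hermite_fun_mult)

lemma integral_kern_partial_sq:
  "(\<integral>y. (kern_partial n x y)\<^sup>2 \<partial>std_normal_distribution) = kern_partial_sq_int n x"
proof -
  let ?a = "\<lambda>j k. r ^ j * hermite_fun j x * r ^ k * hermite_fun k x"
  have inner: "(\<integral>y. (\<Sum>k\<le>n. ?a j k * (hermite_fun j y * hermite_fun k y)) \<partial>std_normal_distribution)
      = (\<Sum>k\<le>n. ?a j k * (if j = k then 1 else 0))" for j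
    by (subst Bochner_Integration.integral_sum)
       (auto simp: integrable_hermite_fun_mult hermite_fun_orthonormal)
  have "(\<integral>y. (kern_partial n x y)\<^sup>2 \<partial>std_normal_distribution) =
      (\<Sum>j\<le>n. \<Sum>k\<le>n. ?a j k * (if j = k then 1 else 0))"
    unfolding kern_partial_sq
    by (subst Bochner_Integration.integral_sum)
       (auto simp: inner intro!: Bochner_Integration.integrable_sum integrable_mult_right
         integrable_hermite_fun_mult)
  also have "\<dots> = kern_partial_sq_int n x"
    by (simp add: kern_partial_sq_int_def if_distrib sum.delta power2_eq_square mult_ac
        cong: if_cong)
  finally show ?thesis .
qed

lemma integrable_kern_partial_sq_int: "integrable std_normal_distribution (kern_partial_sq_int n)"
  unfolding kern_partial_sq_int_def power_mult_distrib
  by (intro Bochner_Integration.integrable_sum integrable_mult_right)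
     (simp add: power2_eq_square integrable_hermite_fun_mult)

lemma integral_kern_partial_sq_int:
  "(\<integral>x. kern_partial_sq_int n x \<partial>std_normal_distribution) = (\<Sum>k\<le>n. (r\<^sup>2) ^ k)"
  unfolding kern_partial_sq_int_def power_mult_distrib
  by (simp add: Bochner_Integration.integral_sum power2_eq_square integrable_hermite_fun_mult
      hermite_fun_orthonormal power_mult_distrib)

end

lemma tendsto_sum_atMost_power:
  fixes q :: real
  assumes "\<bar>q\<bar> < 1"
  shows "(\<lambda>n. \<Sum>k\<le>n. q ^ k) \<longlonglongrightarrow> 1 / (1 - q)"
proof -
  have "(\<lambda>n. \<Sum>k<n. q ^ k) \<longlonglongrightarrow> 1 / (1 - q)"
    using geometric_sums[of q] assms by (simp add: sums_def)
  from LIMSEQ_Suc[OF this] show ?thesis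
    by (simp add: lessThan_Suc_atMost)
qed

section \<open>The standard Gaussian measure on \<open>'n \<Rightarrow> real\<close>\<close>

definition std_normal_PiM :: "('n::finite \<Rightarrow> real) measure" where
  "std_normal_PiM = PiM UNIV (\<lambda>_. std_normal_distribution)"

lemma product_prob_space_std_normal: "product_prob_space (\<lambda>_::'n. std_normal_distribution)"
  by (intro product_prob_spaceI) (rule prob_space_std_normal)

lemma prob_space_std_normal_PiM: "prob_space std_normal_PiM"
  unfolding std_normal_PiM_def by (intro prob_space_PiM) (rule prob_space_std_normal)

lemma sets_std_normal_PiM [measurable_cong]:
  "sets (std_normal_PiM :: ('n::finite \<Rightarrow> real) measure) = sets (PiM UNIV (\<lambda>_::'n. borel))"
  unfolding std_normal_PiM_def by (intro sets_PiM_cong) auto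

lemma space_std_normal_PiM [simp]: "space std_normal_PiM = UNIV"
  by (simp add: std_normal_PiM_def space_PiM)

lemma borel_measurable_std_normal_PiM_prod [measurable]:
  fixes g :: "'n::finite \<Rightarrow> real \<Rightarrow> real"
  assumes [measurable]: "\<And>i. g i \<in> borel_measurable borel"
  shows "(\<lambda>x. \<Prod>i\<in>UNIV. g i (x i)) \<in> borel_measurable std_normal_PiM"
  unfolding std_normal_PiM_def by measurable

lemma integrable_std_normal_PiM_prod:
  fixes g :: "'n::finite \<Rightarrow> real \<Rightarrow> real"
  assumes "\<And>i. integrable std_normal_distribution (g i)"
  shows "integrable std_normal_PiM (\<lambda>x. \<Prod>i\<in>UNIV. g i (x i))"
proof -
  interpret product_prob_space "\<lambda>_::'n. std_normal_distribution"
    by (rule product_prob_space_std_normal)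
  show ?thesis unfolding std_normal_PiM_def by (rule product_integrable_prod) (auto simp: assms)
qed

lemma integral_std_normal_PiM_prod:
  fixes g :: "'n::finite \<Rightarrow> real \<Rightarrow> real"
  assumes "\<And>i. integrable std_normal_distribution (g i)"
  shows "(\<integral>x. (\<Prod>i\<in>UNIV. g i (x i)) \<partial>std_normal_PiM) = (\<Prod>i\<in>UNIV. \<integral>t. g i t \<partial>std_normal_distribution)"
proof -
  interpret product_prob_space "\<lambda>_::'n. std_normal_distribution"
    by (rule product_prob_space_std_normal)
  show ?thesis unfolding std_normal_PiM_def by (rule product_integral_prod) (auto simp: assms)
qed

lemma indicator_PiE_UNIV:
  fixes A :: "'n::finite \<Rightarrow> real set"
  shows "indicator (PiE UNIV A) y = (\<Prod>i\<in>UNIV. indicator (A i) (y i) :: ennreal)"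
  by (auto simp: indicator_def PiE_iff intro: prod_zero)

lemma affine_measurable_std_normal_PiM [measurable]:
  "(\<lambda>z i. a i + b * z i) \<in> measurable std_normal_PiM (std_normal_PiM :: ('n::finite \<Rightarrow> real) measure)"
proof -
  have "(\<lambda>z i. a i + b * z i) \<in> measurable (PiM UNIV (\<lambda>_::'n. borel)) (PiM UNIV (\<lambda>_::'n. borel))"
    by (rule measurable_PiM_single'[where f="\<lambda>i z. a i + b * z i"]) (auto simp: space_PiM)
  then show ?thesis
    by (subst measurable_cong_sets[OF sets_std_normal_PiM sets_std_normal_PiM])
qed

section \<open>The Mehler kernel on \<open>'n \<Rightarrow> real\<close>\<close>

context mehler
begin

definition kern_prod :: "('n::finite \<Rightarrow> real) \<Rightarrow> ('n \<Rightarrow> real) \<Rightarrow> real" where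
  "kern_prod x y = (\<Prod>i\<in>UNIV. kern (x i) (y i))"

definition kern_partial_prod :: "nat \<Rightarrow> ('n::finite \<Rightarrow> real) \<Rightarrow> ('n \<Rightarrow> real) \<Rightarrow> real" where
  "kern_partial_prod n x y = (\<Prod>i\<in>UNIV. kern_partial n (x i) (y i))"

lemma kern_prod_measurable [measurable]: "kern_prod x \<in> borel_measurable std_normal_PiM"
  unfolding kern_prod_def by measurable

lemma kern_partial_prod_measurable [measurable]:
  "kern_partial_prod n x \<in> borel_measurable std_normal_PiM"
  unfolding kern_partial_prod_def by measurable

lemma kern_prod_nonneg: "0 \<le> kern_prod x y"
  by (simp add: kern_prod_def prod_nonneg kern_nonneg)

definition kern_gap :: "nat \<Rightarrow> ('n::finite \<Rightarrow> real) \<Rightarrow> real" where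
  "kern_gap n x = (\<Prod>i\<in>UNIV. kern_sq_int (x i)) - (\<Prod>i\<in>UNIV. kern_partial_sq_int n (x i))"

text \<open>Only the three Gaussian integrals of \<open>K\<^sup>2\<close>, \<open>K S\<^sub>n\<close> and \<open>S\<^sub>n\<^sup>2\<close> are needed, and each
  factorises over the coordinates.\<close>
lemma integral_kern_prod_minus_partial_sq:
  shows "integrable std_normal_PiM (\<lambda>y. (kern_prod x y - kern_partial_prod n x y)\<^sup>2)"
    and "(\<integral>y. (kern_prod x y - kern_partial_prod n x y)\<^sup>2 \<partial>std_normal_PiM) = kern_gap n x"
proof -
  let ?K = "kern_prod x" and ?S = "kern_partial_prod n x"
  have K2: "(?K y)\<^sup>2 = (\<Prod>i\<in>UNIV. (kern (x i) (y i))\<^sup>2)"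
    and S2: "(?S y)\<^sup>2 = (\<Prod>i\<in>UNIV. (kern_partial n (x i) (y i))\<^sup>2)"
    and KS: "2 * ?K y * ?S y = 2 * (\<Prod>i\<in>UNIV. kern (x i) (y i) * kern_partial n (x i) (y i))" for y
    by (simp_all add: kern_prod_def kern_partial_prod_def prod_power_distrib prod.distrib)
  have iK: "integrable std_normal_PiM (\<lambda>y. (?K y)\<^sup>2)"
    and iS: "integrable std_normal_PiM (\<lambda>y. (?S y)\<^sup>2)"
    and iKS: "integrable std_normal_PiM (\<lambda>y. 2 * ?K y * ?S y)"
    unfolding K2 S2 KS
    by (intro integrable_mult_right integrable_std_normal_PiM_prod integrable_kern_sq
        integrable_kern_partial_sq integrable_kern_mult_kern_partial)+
  show "integrable std_normal_PiM (\<lambda>y. (?K y - ?S y)\<^sup>2)"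
    unfolding power2_diff using iK iS iKS by simp
  have "(\<integral>y. (?K y - ?S y)\<^sup>2 \<partial>std_normal_PiM) =
      (\<integral>y. (?K y)\<^sup>2 \<partial>std_normal_PiM) + (\<integral>y. (?S y)\<^sup>2 \<partial>std_normal_PiM)
      - (\<integral>y. 2 * ?K y * ?S y \<partial>std_normal_PiM)"
    unfolding power2_diff using iK iS iKS by simp
  also have "(\<integral>y. (?K y)\<^sup>2 \<partial>std_normal_PiM) = (\<Prod>i\<in>UNIV. kern_sq_int (x i))"
    unfolding K2 by (subst integral_std_normal_PiM_prod) (auto simp: integrable_kern_sq integral_kern_sq)
  also have "(\<integral>y. (?S y)\<^sup>2 \<partial>std_normal_PiM) = (\<Prod>i\<in>UNIV. kern_partial_sq_int n (x i))"
    unfolding S2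
    by (subst integral_std_normal_PiM_prod) (auto simp: integrable_kern_partial_sq integral_kern_partial_sq)
  also have "(\<integral>y. 2 * ?K y * ?S y \<partial>std_normal_PiM) = 2 * (\<Prod>i\<in>UNIV. kern_partial_sq_int n (x i))"
    unfolding KS
    by (subst integral_mult_right_zero, subst integral_std_normal_PiM_prod)
       (auto simp: integrable_kern_mult_kern_partial integral_kern_mult_kern_partial)
  finally show "(\<integral>y. (?K y - ?S y)\<^sup>2 \<partial>std_normal_PiM) = kern_gap n x"
    by (simp add: kern_gap_def)
qed

lemma kern_gap_measurable [measurable]: "kern_gap n \<in> borel_measurable std_normal_PiM"
  unfolding kern_gap_def by measurable

lemma integral_kern_gap:
  shows "integrable std_normal_PiM (kern_gap n :: ('n::finite \<Rightarrow> real) \<Rightarrow> real)"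
    and "(\<integral>x. kern_gap n x \<partial>(std_normal_PiM :: ('n \<Rightarrow> real) measure)) =
      (1 / (1 - r\<^sup>2)) ^ CARD('n) - (\<Sum>k\<le>n. (r\<^sup>2) ^ k) ^ CARD('n)"
proof -
  have i: "integrable std_normal_PiM (\<lambda>x :: 'n \<Rightarrow> real. \<Prod>i\<in>UNIV. kern_sq_int (x i))"
    "integrable std_normal_PiM (\<lambda>x :: 'n \<Rightarrow> real. \<Prod>i\<in>UNIV. kern_partial_sq_int n (x i))"
    by (intro integrable_std_normal_PiM_prod integrable_kern_sq_int integrable_kern_partial_sq_int)+
  then show "integrable std_normal_PiM (kern_gap n :: ('n \<Rightarrow> real) \<Rightarrow> real)"
    unfolding kern_gap_def by (rule Bochner_Integration.integrable_diff)
  have "(\<integral>x. (\<Prod>i\<in>UNIV. kern_sq_int (x i)) \<partial>(std_normal_PiM :: ('n \<Rightarrow> real) measure)) =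
      (1 / (1 - r\<^sup>2)) ^ CARD('n)"
    by (subst integral_std_normal_PiM_prod) (auto simp: integrable_kern_sq_int integral_kern_sq_int)
  moreover have "(\<integral>x. (\<Prod>i\<in>UNIV. kern_partial_sq_int n (x i)) \<partial>(std_normal_PiM :: ('n \<Rightarrow> real) measure)) =
      (\<Sum>k\<le>n. (r\<^sup>2) ^ k) ^ CARD('n)"
    by (subst integral_std_normal_PiM_prod)
       (auto simp: integrable_kern_partial_sq_int integral_kern_partial_sq_int)
  ultimately show "(\<integral>x. kern_gap n x \<partial>(std_normal_PiM :: ('n \<Rightarrow> real) measure)) =
      (1 / (1 - r\<^sup>2)) ^ CARD('n) - (\<Sum>k\<le>n. (r\<^sup>2) ^ k) ^ CARD('n)"
    unfolding kern_gap_def using i by simp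
qed

definition shifted_normal :: "('n::finite \<Rightarrow> real) \<Rightarrow> 'n \<Rightarrow> real measure" where
  "shifted_normal x i = distr std_normal_distribution lborel (\<lambda>t. r * x i + s * t)"

lemma product_prob_space_shifted_normal: "product_prob_space (shifted_normal x)"
proof (intro product_prob_spaceI)
  interpret prob_space std_normal_distribution by (rule prob_space_std_normal)
  show "prob_space (shifted_normal x i)" for i
    unfolding shifted_normal_def by (rule prob_space_distr) simp
qed

lemma density_kern_prod_eq_PiM:
  "density std_normal_PiM (kern_prod x) = PiM UNIV (shifted_normal (x :: 'n::finite \<Rightarrow> real))"
proof -
  interpret product_prob_space "shifted_normal x" by (rule product_prob_space_shifted_normal)
  interpret N: product_prob_space "\<lambda>_::'n. std_normal_distribution"
    by (rule product_prob_space_std_normal)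
  show ?thesis
  proof (rule PiM_eqI)
    fix A assume "\<And>i. i \<in> UNIV \<Longrightarrow> A i \<in> sets (shifted_normal x i)"
    then have [measurable]: "\<And>i. A i \<in> sets borel" by (simp add: shifted_normal_def)
    have "emeasure (density std_normal_PiM (kern_prod x)) (PiE UNIV A)
        = (\<integral>\<^sup>+y. ennreal (kern_prod x y) * indicator (PiE UNIV A) y \<partial>std_normal_PiM)"
      by (subst emeasure_density) (auto simp: sets_std_normal_PiM intro!: sets_PiM_I_finite)
    also have "\<dots> = (\<integral>\<^sup>+y. (\<Prod>i\<in>UNIV. ennreal (kern (x i) (y i)) * indicator (A i) (y i))
        \<partial>PiM UNIV (\<lambda>_. std_normal_distribution))"
      unfolding std_normal_PiM_def indicator_PiE_UNIV kern_prod_def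
      by (simp add: prod_ennreal[symmetric] kern_nonneg prod.distrib)
    also have "\<dots> = (\<Prod>i\<in>UNIV. \<integral>\<^sup>+t. ennreal (kern (x i) t) * indicator (A i) t \<partial>std_normal_distribution)"
      by (rule N.product_nn_integral_prod) auto
    also have "\<dots> = (\<Prod>i\<in>UNIV. emeasure (shifted_normal x i) (A i))"
      by (intro prod.cong refl) (simp add: shifted_normal_def density_kern[symmetric] emeasure_density)
    finally show "emeasure (density std_normal_PiM (kern_prod x)) (PiE UNIV A) =
        (\<Prod>i\<in>UNIV. emeasure (shifted_normal x i) (A i))" .
  qed (simp_all add: sets_std_normal_PiM shifted_normal_def cong: sets_PiM_cong)
qed

lemma distr_std_normal_PiM_affine_eq_PiM:
  "distr std_normal_PiM std_normal_PiM (\<lambda>z i. r * x i + s * z i) =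
     PiM UNIV (shifted_normal (x :: 'n::finite \<Rightarrow> real))"
proof -
  interpret product_prob_space "shifted_normal x" by (rule product_prob_space_shifted_normal)
  interpret N: product_prob_space "\<lambda>_::'n. std_normal_distribution"
    by (rule product_prob_space_std_normal)
  show ?thesis
  proof (rule PiM_eqI)
    fix A assume "\<And>i. i \<in> UNIV \<Longrightarrow> A i \<in> sets (shifted_normal x i)"
    then have [measurable]: "\<And>i. A i \<in> sets borel" by (simp add: shifted_normal_def)
    let ?aff = "\<lambda>i t. r * x i + s * t"
    have pre_meas: "?aff i -` A i \<in> sets borel" for i
      using measurable_sets_borel[of "?aff i" borel "A i"] by simp
    have "(\<lambda>z i. r * x i + s * z i) -` PiE UNIV A = PiE UNIV (\<lambda>i. ?aff i -` A i)"
      by (auto simp: PiE_iff)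
    then have "emeasure (distr std_normal_PiM std_normal_PiM (\<lambda>z i. r * x i + s * z i)) (PiE UNIV A)
        = emeasure std_normal_PiM (PiE UNIV (\<lambda>i. ?aff i -` A i))"
      by (subst emeasure_distr) (auto simp: sets_std_normal_PiM intro!: sets_PiM_I_finite)
    also have "\<dots> = (\<Prod>i\<in>UNIV. emeasure std_normal_distribution (?aff i -` A i))"
      unfolding std_normal_PiM_def by (rule N.emeasure_PiM) (auto simp: pre_meas)
    also have "\<dots> = (\<Prod>i\<in>UNIV. emeasure (shifted_normal x i) (A i))"
      by (intro prod.cong refl) (simp add: shifted_normal_def emeasure_distr)
    finally show "emeasure (distr std_normal_PiM std_normal_PiM (\<lambda>z i. r * x i + s * z i)) (PiE UNIV A)
        = (\<Prod>i\<in>UNIV. emeasure (shifted_normal x i) (A i))" .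
  qed (simp_all add: sets_std_normal_PiM shifted_normal_def cong: sets_PiM_cong)
qed

lemma density_kern_prod:
  "density std_normal_PiM (kern_prod x) = distr std_normal_PiM std_normal_PiM (\<lambda>z i. r * x i + s * z i)"
  by (simp add: density_kern_prod_eq_PiM distr_std_normal_PiM_affine_eq_PiM)

lemma integrable_kern_prod_mult_iff:
  assumes [measurable]: "g \<in> borel_measurable std_normal_PiM"
  shows "integrable std_normal_PiM (\<lambda>y. kern_prod x y * g y) \<longleftrightarrow>
    integrable std_normal_PiM (\<lambda>z. g (\<lambda>i. r * x i + s * z i))"
proof -
  have "integrable std_normal_PiM (\<lambda>y. kern_prod x y * g y) \<longleftrightarrow>
      integrable (density std_normal_PiM (kern_prod x)) g"
    by (subst integrable_density) (auto simp: kern_prod_nonneg)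
  also have "\<dots> \<longleftrightarrow> integrable std_normal_PiM (\<lambda>z. g (\<lambda>i. r * x i + s * z i))"
    unfolding density_kern_prod by (subst integrable_distr_eq) auto
  finally show ?thesis .
qed

lemma integral_kern_prod_mult:
  assumes [measurable]: "g \<in> borel_measurable std_normal_PiM"
  shows "(\<integral>y. kern_prod x y * g y \<partial>std_normal_PiM) =
    (\<integral>z. g (\<lambda>i. r * x i + s * z i) \<partial>std_normal_PiM)"
proof -
  have "(\<integral>y. kern_prod x y * g y \<partial>std_normal_PiM) =
      integral\<^sup>L (density std_normal_PiM (kern_prod x)) g"
    by (subst integral_density) (auto simp: kern_prod_nonneg)
  also have "\<dots> = (\<integral>z. g (\<lambda>i. r * x i + s * z i) \<partial>std_normal_PiM)"
    unfolding density_kern_prod by (subst integral_distr) auto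
  finally show ?thesis .
qed

end

section \<open>Multivariate Hermite functions\<close>

lemma (in prob_space) integral_abs_le_sqrt_integral_sq:
  fixes g :: "'a \<Rightarrow> real"
  assumes [measurable]: "g \<in> borel_measurable M" and sq: "integrable M (\<lambda>x. (g x)\<^sup>2)"
  shows "(\<integral>x. \<bar>g x\<bar> \<partial>M) \<le> sqrt (\<integral>x. (g x)\<^sup>2 \<partial>M)"
proof -
  have "integrable M g"
    by (rule square_integrable_imp_integrable) (auto simp: sq)
  then have "(\<integral>x. \<bar>g x\<bar> \<partial>M)\<^sup>2 \<le> (\<integral>x. (g x)\<^sup>2 \<partial>M)"
    using variance_eq[of "\<lambda>x. \<bar>g x\<bar>"] variance_positive[of "\<lambda>x. \<bar>g x\<bar>"] sq by simp
  then show ?thesis by (rule real_le_rsqrt)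
qed

lemma integral_abs_add_le:
  fixes f g :: "'a \<Rightarrow> real"
  assumes "integrable M f" and "integrable M g"
  shows "(\<integral>x. \<bar>f x + g x\<bar> \<partial>M) \<le> (\<integral>x. \<bar>f x\<bar> \<partial>M) + (\<integral>x. \<bar>g x\<bar> \<partial>M)"
proof -
  have "(\<integral>x. \<bar>f x + g x\<bar> \<partial>M) \<le> (\<integral>x. \<bar>f x\<bar> + \<bar>g x\<bar> \<partial>M)"
    using assms by (intro integral_mono Bochner_Integration.integrable_add integrable_abs abs_triangle_ineq)
  also have "\<dots> = (\<integral>x. \<bar>f x\<bar> \<partial>M) + (\<integral>x. \<bar>g x\<bar> \<partial>M)"
    using assms by (intro Bochner_Integration.integral_add integrable_abs)
  finally show ?thesis .
qed

definition hermite_multi :: "('n::finite \<Rightarrow> nat) \<Rightarrow> ('n \<Rightarrow> real) \<Rightarrow> real" where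
  "hermite_multi \<alpha> x = (\<Prod>i\<in>UNIV. hermite_fun (\<alpha> i) (x i))"

lemma hermite_multi_measurable [measurable]: "hermite_multi \<alpha> \<in> borel_measurable std_normal_PiM"
  unfolding hermite_multi_def by measurable

lemma integrable_hermite_multi: "integrable std_normal_PiM (hermite_multi \<alpha>)"
  unfolding hermite_multi_def by (rule integrable_std_normal_PiM_prod) (rule integrable_hermite_fun)

lemma hermite_multi_mult:
  "hermite_multi \<alpha> x * hermite_multi \<beta> x = (\<Prod>i\<in>UNIV. hermite_fun (\<alpha> i) (x i) * hermite_fun (\<beta> i) (x i))"
  by (simp add: hermite_multi_def prod.distrib)

lemma integrable_hermite_multi_mult:
  "integrable std_normal_PiM (\<lambda>x. hermite_multi \<alpha> x * hermite_multi \<beta> x)"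
  unfolding hermite_multi_mult
  by (rule integrable_std_normal_PiM_prod) (rule integrable_hermite_fun_mult)

lemma hermite_multi_orthonormal:
  "(\<integral>x. hermite_multi \<alpha> x * hermite_multi \<beta> x \<partial>std_normal_PiM) = (if \<alpha> = \<beta> then 1 else 0)"
proof -
  have "(\<integral>x. hermite_multi \<alpha> x * hermite_multi \<beta> x \<partial>std_normal_PiM) =
      (\<Prod>i\<in>UNIV. if \<alpha> i = \<beta> i then 1 else 0)"
    unfolding hermite_multi_mult
    by (subst integral_std_normal_PiM_prod) (auto simp: integrable_hermite_fun_mult hermite_fun_orthonormal)
  also have "\<dots> = (if \<alpha> = \<beta> then 1 else 0)"
    by (auto simp: fun_eq_iff intro: prod_zero)
  finally show ?thesis .
qed

lemma parseval_hermite_multi: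
  assumes "finite B"
  shows "integrable std_normal_PiM (\<lambda>x. (\<Sum>\<alpha>\<in>B. a \<alpha> * hermite_multi \<alpha> x)\<^sup>2)"
    and "(\<integral>x. (\<Sum>\<alpha>\<in>B. a \<alpha> * hermite_multi \<alpha> x)\<^sup>2 \<partial>std_normal_PiM) = (\<Sum>\<alpha>\<in>B. (a \<alpha>)\<^sup>2)"
proof -
  have sq: "(\<Sum>\<alpha>\<in>B. a \<alpha> * hermite_multi \<alpha> x)\<^sup>2 =
      (\<Sum>\<alpha>\<in>B. \<Sum>\<beta>\<in>B. (a \<alpha> * a \<beta>) * (hermite_multi \<alpha> x * hermite_multi \<beta> x))" for x
    unfolding power2_eq_square sum_product by (simp add: ac_simps)
  show "integrable std_normal_PiM (\<lambda>x. (\<Sum>\<alpha>\<in>B. a \<alpha> * hermite_multi \<alpha> x)\<^sup>2)"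
    unfolding sq
    by (intro Bochner_Integration.integrable_sum integrable_mult_right integrable_hermite_multi_mult)
  have inner: "(\<integral>x. (\<Sum>\<beta>\<in>B. (a \<alpha> * a \<beta>) * (hermite_multi \<alpha> x * hermite_multi \<beta> x)) \<partial>std_normal_PiM)
      = (\<Sum>\<beta>\<in>B. (a \<alpha> * a \<beta>) * (if \<alpha> = \<beta> then 1 else 0))" for \<alpha>
    by (subst Bochner_Integration.integral_sum)
       (auto simp: integrable_hermite_multi_mult hermite_multi_orthonormal)
  have "(\<integral>x. (\<Sum>\<alpha>\<in>B. a \<alpha> * hermite_multi \<alpha> x)\<^sup>2 \<partial>std_normal_PiM) =
      (\<Sum>\<alpha>\<in>B. \<Sum>\<beta>\<in>B. (a \<alpha> * a \<beta>) * (if \<alpha> = \<beta> then 1 else 0))"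
    unfolding sq
    by (subst Bochner_Integration.integral_sum)
       (auto simp: inner intro!: Bochner_Integration.integrable_sum integrable_mult_right
         integrable_hermite_multi_mult)
  also have "\<dots> = (\<Sum>\<alpha>\<in>B. (a \<alpha>)\<^sup>2)"
    using assms by (simp add: if_distrib sum.delta power2_eq_square cong: if_cong)
  finally show "(\<integral>x. (\<Sum>\<alpha>\<in>B. a \<alpha> * hermite_multi \<alpha> x)\<^sup>2 \<partial>std_normal_PiM) = (\<Sum>\<alpha>\<in>B. (a \<alpha>)\<^sup>2)" .
qed

definition index_box :: "nat \<Rightarrow> ('n::finite \<Rightarrow> nat) set" where
  "index_box n = PiE UNIV (\<lambda>_. {..n})"

definition index_deg_le :: "nat \<Rightarrow> ('n::finite \<Rightarrow> nat) set" where
  "index_deg_le d = {\<alpha>. (\<Sum>i\<in>UNIV. \<alpha> i) \<le> d}"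

lemma finite_index_box [simp]: "finite (index_box n)"
  by (simp add: index_box_def finite_PiE)

lemma index_deg_le_subset_box:
  assumes "d \<le> n"
  shows "index_deg_le d \<subseteq> index_box n"
proof
  fix \<alpha>
  assume "\<alpha> \<in> index_deg_le d"
  moreover have "\<alpha> i \<le> (\<Sum>i\<in>UNIV. \<alpha> i)" for i
    by (rule member_le_sum) auto
  ultimately show "\<alpha> \<in> index_box n"
    using assms by (auto simp: index_deg_le_def index_box_def PiE_iff intro: le_trans)
qed

lemma finite_index_deg_le [simp]: "finite (index_deg_le d)"
  using finite_subset[OF index_deg_le_subset_box[OF order_refl]] by simp

context mehler
begin

lemma kern_partial_prod_eq_sum:
  "kern_partial_prod n x y =
     (\<Sum>\<alpha>\<in>index_box n. r ^ (\<Sum>i\<in>UNIV. \<alpha> i) * hermite_multi \<alpha> x * hermite_multi \<alpha> y)"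
proof -
  have "kern_partial_prod n x y = (\<Prod>i\<in>UNIV. \<Sum>k\<le>n. r ^ k * hermite_fun k (x i) * hermite_fun k (y i))"
    by (simp add: kern_partial_prod_def kern_partial_def)
  also have "\<dots> = (\<Sum>\<alpha>\<in>index_box n. \<Prod>i\<in>UNIV.
      r ^ (\<alpha> i) * hermite_fun (\<alpha> i) (x i) * hermite_fun (\<alpha> i) (y i))"
    unfolding index_box_def by (rule prod_sum_PiE) auto
  also have "\<dots> = (\<Sum>\<alpha>\<in>index_box n. r ^ (\<Sum>i\<in>UNIV. \<alpha> i) * hermite_multi \<alpha> x * hermite_multi \<alpha> y)"
    by (simp add: hermite_multi_def power_sum prod.distrib)
  finally show ?thesis .
qed

end

section \<open>Smoothing a sign function and truncating its Hermite series\<close>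

locale mehler_sign = mehler +
  fixes F :: "('n::finite \<Rightarrow> real) \<Rightarrow> real"
  assumes F_measurable [measurable]: "F \<in> borel_measurable std_normal_PiM"
    and F_sign: "\<And>x. F x = -1 \<or> F x = 1"
begin

lemma abs_F [simp]: "\<bar>F x\<bar> = 1"
  and F_sq [simp]: "(F x)\<^sup>2 = 1"
  using F_sign[of x] by auto

lemma integrable_mult_F:
  assumes "integrable std_normal_PiM g"
  shows "integrable std_normal_PiM (\<lambda>x. g x * F x)"
proof -
  have [measurable]: "g \<in> borel_measurable std_normal_PiM"
    using assms by (rule borel_measurable_integrable)
  show ?thesis
    by (rule Bochner_Integration.integrable_bound[OF assms]) (auto simp: abs_mult)
qed

definition hermite_coeff :: "('n \<Rightarrow> nat) \<Rightarrow> real" where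
  "hermite_coeff \<alpha> = (\<integral>x. hermite_multi \<alpha> x * F x \<partial>std_normal_PiM)"

lemma bessel_hermite_coeff:
  assumes "finite B"
  shows "(\<Sum>\<alpha>\<in>B. (hermite_coeff \<alpha>)\<^sup>2) \<le> 1"
proof -
  interpret prob_space "std_normal_PiM :: ('n \<Rightarrow> real) measure"
    by (rule prob_space_std_normal_PiM)
  let ?S = "\<lambda>x. \<Sum>\<alpha>\<in>B. hermite_coeff \<alpha> * hermite_multi \<alpha> x"
  have iSF: "integrable std_normal_PiM (\<lambda>x. hermite_coeff \<alpha> * (hermite_multi \<alpha> x * F x))" for \<alpha>
    by (intro integrable_mult_right integrable_mult_F integrable_hermite_multi)
  have SF_sum: "?S x * F x = (\<Sum>\<alpha>\<in>B. hermite_coeff \<alpha> * (hermite_multi \<alpha> x * F x))" for x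
    by (simp add: sum_distrib_right mult.assoc)
  have iS2: "integrable std_normal_PiM (\<lambda>x. (?S x)\<^sup>2)"
    by (rule parseval_hermite_multi(1)[OF assms])
  have iSF2: "integrable std_normal_PiM (\<lambda>x. 2 * (?S x * F x))"
    unfolding SF_sum by (intro integrable_mult_right Bochner_Integration.integrable_sum iSF)
  have SF: "(\<integral>x. ?S x * F x \<partial>std_normal_PiM) = (\<Sum>\<alpha>\<in>B. (hermite_coeff \<alpha>)\<^sup>2)"
    unfolding SF_sum
    by (subst Bochner_Integration.integral_sum)
       (auto simp: iSF hermite_coeff_def power2_eq_square integrable_mult_F integrable_hermite_multi)
  have "0 \<le> (\<integral>x. (F x - ?S x)\<^sup>2 \<partial>std_normal_PiM)"
    by simp
  also have "\<dots> = (\<integral>x. 1 + ((?S x)\<^sup>2 - 2 * (?S x * F x)) \<partial>std_normal_PiM)"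
    by (simp add: power2_diff algebra_simps)
  also have "\<dots> = 1 + ((\<integral>x. (?S x)\<^sup>2 \<partial>std_normal_PiM) - 2 * (\<integral>x. ?S x * F x \<partial>std_normal_PiM))"
    using iS2 iSF2 prob_space by simp
  also have "\<dots> = 1 - (\<Sum>\<alpha>\<in>B. (hermite_coeff \<alpha>)\<^sup>2)"
    unfolding SF parseval_hermite_multi(2)[OF assms] by simp
  finally show ?thesis by simp
qed

definition smooth :: "('n \<Rightarrow> real) \<Rightarrow> real" where
  "smooth x = (\<integral>z. F (\<lambda>i. r * x i + s * z i) \<partial>std_normal_PiM)"

lemma F_affine_measurable [measurable]:
  "(\<lambda>(x, z). F (\<lambda>i. r * x i + s * z i)) \<in> borel_measurable (std_normal_PiM \<Otimes>\<^sub>M std_normal_PiM)"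
proof -
  have "(\<lambda>p i. r * fst p i + s * snd p i) \<in> measurable (std_normal_PiM \<Otimes>\<^sub>M std_normal_PiM) std_normal_PiM"
    unfolding std_normal_PiM_def
    by (rule measurable_PiM_single'[where f="\<lambda>i p. r * fst p i + s * snd p i"]) measurable
  from measurable_comp[OF this F_measurable] show ?thesis
    by (simp add: case_prod_beta comp_def)
qed

lemma smooth_measurable [measurable]: "smooth \<in> borel_measurable std_normal_PiM"
proof -
  interpret prob_space "std_normal_PiM :: ('n \<Rightarrow> real) measure"
    by (rule prob_space_std_normal_PiM)
  show ?thesis unfolding smooth_def by measurable
qed

lemma integrable_F_affine: "integrable std_normal_PiM (\<lambda>z. F (\<lambda>i. r * x i + s * z i))"
proof -
  interpret prob_space "std_normal_PiM :: ('n \<Rightarrow> real) measure"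
    by (rule prob_space_std_normal_PiM)
  show ?thesis
    by (rule Bochner_Integration.integrable_bound[where f="\<lambda>_. 1 :: real"]) simp_all
qed

lemma smooth_eq_kern_prod: "smooth x = (\<integral>y. kern_prod x y * F y \<partial>std_normal_PiM)"
  unfolding smooth_def by (rule integral_kern_prod_mult[symmetric]) simp

lemma abs_smooth_le_1: "\<bar>smooth x\<bar> \<le> 1"
proof -
  interpret prob_space "std_normal_PiM :: ('n \<Rightarrow> real) measure"
    by (rule prob_space_std_normal_PiM)
  have "\<bar>smooth x\<bar> \<le> (\<integral>z. \<bar>F (\<lambda>i. r * x i + s * z i)\<bar> \<partial>std_normal_PiM)"
    unfolding smooth_def by (rule integral_abs_bound)
  then show ?thesis
    using prob_space by simp
qed

definition smooth_box :: "nat \<Rightarrow> ('n \<Rightarrow> real) \<Rightarrow> real" where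
  "smooth_box n x = (\<Sum>\<alpha>\<in>index_box n. r ^ (\<Sum>i\<in>UNIV. \<alpha> i) * hermite_coeff \<alpha> * hermite_multi \<alpha> x)"

definition smooth_trunc :: "nat \<Rightarrow> ('n \<Rightarrow> real) \<Rightarrow> real" where
  "smooth_trunc d x = (\<Sum>\<alpha>\<in>index_deg_le d. r ^ (\<Sum>i\<in>UNIV. \<alpha> i) * hermite_coeff \<alpha> * hermite_multi \<alpha> x)"

lemma smooth_box_measurable [measurable]: "smooth_box n \<in> borel_measurable std_normal_PiM"
  unfolding smooth_box_def by measurable

lemma smooth_trunc_measurable [measurable]: "smooth_trunc d \<in> borel_measurable std_normal_PiM"
  unfolding smooth_trunc_def by measurable

lemma smooth_minus_box_eq:
  "smooth x - smooth_box n x = (\<integral>y. (kern_prod x y - kern_partial_prod n x y) * F y \<partial>std_normal_PiM)"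
proof -
  let ?t = "\<lambda>\<alpha> y. (r ^ (\<Sum>i\<in>UNIV. \<alpha> i) * hermite_multi \<alpha> x) * (hermite_multi \<alpha> y * F y)"
  have i: "integrable std_normal_PiM (?t \<alpha>)" for \<alpha>
    by (intro integrable_mult_right integrable_mult_F integrable_hermite_multi)
  have SF: "kern_partial_prod n x y * F y = (\<Sum>\<alpha>\<in>index_box n. ?t \<alpha> y)" for y
    unfolding kern_partial_prod_eq_sum sum_distrib_right by (simp add: ac_simps)
  have iSF: "integrable std_normal_PiM (\<lambda>y. kern_partial_prod n x y * F y)"
    unfolding SF by (intro Bochner_Integration.integrable_sum i)
  have "(\<integral>y. kern_partial_prod n x y * F y \<partial>std_normal_PiM) = (\<Sum>\<alpha>\<in>index_box n. integral\<^sup>L std_normal_PiM (?t \<alpha>))"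
    unfolding SF by (rule Bochner_Integration.integral_sum) (rule i)
  also have "\<dots> = smooth_box n x"
    by (simp add: smooth_box_def hermite_coeff_def) (simp add: mult_ac)
  finally have "(\<integral>y. kern_partial_prod n x y * F y \<partial>std_normal_PiM) = smooth_box n x" .
  moreover have "integrable std_normal_PiM (\<lambda>y. kern_prod x y * F y)"
    by (subst integrable_kern_prod_mult_iff) (auto simp: integrable_F_affine)
  ultimately show ?thesis
    using iSF by (simp add: smooth_eq_kern_prod left_diff_distrib)
qed

lemma smooth_minus_box_sq_le: "(smooth x - smooth_box n x)\<^sup>2 \<le> kern_gap n x"
proof -
  interpret prob_space "std_normal_PiM :: ('n \<Rightarrow> real) measure"
    by (rule prob_space_std_normal_PiM)
  let ?D = "\<lambda>y. kern_prod x y - kern_partial_prod n x y"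
  have "\<bar>smooth x - smooth_box n x\<bar> \<le> (\<integral>y. \<bar>?D y * F y\<bar> \<partial>std_normal_PiM)"
    unfolding smooth_minus_box_eq by (rule integral_abs_bound)
  also have "\<dots> \<le> sqrt (\<integral>y. (?D y)\<^sup>2 \<partial>std_normal_PiM)"
    by (simp add: abs_mult integral_abs_le_sqrt_integral_sq integral_kern_prod_minus_partial_sq(1))
  finally have "\<bar>smooth x - smooth_box n x\<bar>\<^sup>2 \<le> (sqrt (\<integral>y. (?D y)\<^sup>2 \<partial>std_normal_PiM))\<^sup>2"
    by (rule power_mono) simp
  moreover have "0 \<le> (\<integral>y. (?D y)\<^sup>2 \<partial>std_normal_PiM)"
    by simp
  ultimately have "(smooth x - smooth_box n x)\<^sup>2 \<le> (\<integral>y. (?D y)\<^sup>2 \<partial>std_normal_PiM)"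
    by simp
  then show ?thesis
    by (simp add: integral_kern_prod_minus_partial_sq(2))
qed

lemma integral_abs_smooth_minus_box_le:
  shows "integrable std_normal_PiM (\<lambda>x. smooth x - smooth_box n x)"
    and "(\<integral>x. \<bar>smooth x - smooth_box n x\<bar> \<partial>std_normal_PiM) \<le>
      sqrt ((1 / (1 - r\<^sup>2)) ^ CARD('n) - (\<Sum>k\<le>n. (r\<^sup>2) ^ k) ^ CARD('n))"
proof -
  interpret prob_space "std_normal_PiM :: ('n \<Rightarrow> real) measure"
    by (rule prob_space_std_normal_PiM)
  have "\<bar>(smooth x - smooth_box n x)\<^sup>2\<bar> \<le> \<bar>kern_gap n x\<bar>" for x
    using smooth_minus_box_sq_le[of x n] by simp
  then have i: "integrable std_normal_PiM (\<lambda>x. (smooth x - smooth_box n x)\<^sup>2)"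
    by (intro Bochner_Integration.integrable_bound[OF integral_kern_gap(1)[of n]]) simp_all
  show "integrable std_normal_PiM (\<lambda>x. smooth x - smooth_box n x)"
    by (rule square_integrable_imp_integrable) (auto simp: i)
  have "(\<integral>x. \<bar>smooth x - smooth_box n x\<bar> \<partial>std_normal_PiM) \<le>
      sqrt (\<integral>x. (smooth x - smooth_box n x)\<^sup>2 \<partial>std_normal_PiM)"
    by (rule integral_abs_le_sqrt_integral_sq) (auto simp: i)
  also have "\<dots> \<le> sqrt (\<integral>x. kern_gap n x \<partial>(std_normal_PiM :: ('n \<Rightarrow> real) measure))"
    by (intro real_sqrt_le_mono integral_mono i integral_kern_gap(1) smooth_minus_box_sq_le)
  finally show "(\<integral>x. \<bar>smooth x - smooth_box n x\<bar> \<partial>std_normal_PiM) \<le>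
      sqrt ((1 / (1 - r\<^sup>2)) ^ CARD('n) - (\<Sum>k\<le>n. (r\<^sup>2) ^ k) ^ CARD('n))"
    unfolding integral_kern_gap(2) .
qed

lemma sum_sq_hermite_tail_le:
  assumes "finite B" and high: "\<And>\<alpha>. \<alpha> \<in> B \<Longrightarrow> d < (\<Sum>i\<in>UNIV. \<alpha> i)"
  shows "(\<Sum>\<alpha>\<in>B. (r ^ (\<Sum>i\<in>UNIV. \<alpha> i) * hermite_coeff \<alpha>)\<^sup>2) \<le> (r ^ (d + 1))\<^sup>2"
proof -
  have "(\<Sum>\<alpha>\<in>B. (r ^ (\<Sum>i\<in>UNIV. \<alpha> i) * hermite_coeff \<alpha>)\<^sup>2) \<le>
      (\<Sum>\<alpha>\<in>B. (r ^ (d + 1))\<^sup>2 * (hermite_coeff \<alpha>)\<^sup>2)"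
  proof (intro sum_mono)
    fix \<alpha> assume "\<alpha> \<in> B"
    then have "r ^ (\<Sum>i\<in>UNIV. \<alpha> i) \<le> r ^ (d + 1)"
      using high r_nonneg r_less_1 by (intro power_decreasing) (auto simp: Suc_le_eq)
    then have "(r ^ (\<Sum>i\<in>UNIV. \<alpha> i))\<^sup>2 \<le> (r ^ (d + 1))\<^sup>2"
      using r_nonneg by (intro power_mono) auto
    then show "(r ^ (\<Sum>i\<in>UNIV. \<alpha> i) * hermite_coeff \<alpha>)\<^sup>2 \<le> (r ^ (d + 1))\<^sup>2 * (hermite_coeff \<alpha>)\<^sup>2"
      by (simp add: power_mult_distrib mult_right_mono)
  qed
  also have "\<dots> \<le> (r ^ (d + 1))\<^sup>2"
    using bessel_hermite_coeff[OF assms(1)] by (simp add: sum_distrib_left[symmetric] mult_left_le)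
  finally show ?thesis .
qed

lemma integral_abs_box_minus_trunc_le:
  assumes "d \<le> n"
  shows "integrable std_normal_PiM (\<lambda>x. smooth_box n x - smooth_trunc d x)"
    and "(\<integral>x. \<bar>smooth_box n x - smooth_trunc d x\<bar> \<partial>std_normal_PiM) \<le> r ^ (d + 1)"
proof -
  interpret prob_space "std_normal_PiM :: ('n \<Rightarrow> real) measure"
    by (rule prob_space_std_normal_PiM)
  let ?B = "index_box n - index_deg_le d"
  let ?a = "\<lambda>\<alpha>. r ^ (\<Sum>i\<in>UNIV. \<alpha> i) * hermite_coeff \<alpha>"
  have diff: "smooth_box n x - smooth_trunc d x = (\<Sum>\<alpha>\<in>?B. ?a \<alpha> * hermite_multi \<alpha> x)" for x
    unfolding smooth_box_def smooth_trunc_def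
    using sum.subset_diff[OF index_deg_le_subset_box[OF assms] finite_index_box,
        of "\<lambda>\<alpha>. ?a \<alpha> * hermite_multi \<alpha> x"]
    by simp
  have fin: "finite ?B" by simp
  have i: "integrable std_normal_PiM (\<lambda>x. (smooth_box n x - smooth_trunc d x)\<^sup>2)"
    unfolding diff by (rule parseval_hermite_multi(1)[OF fin])
  show "integrable std_normal_PiM (\<lambda>x. smooth_box n x - smooth_trunc d x)"
    by (rule square_integrable_imp_integrable) (auto simp: i)
  have "(\<integral>x. \<bar>smooth_box n x - smooth_trunc d x\<bar> \<partial>std_normal_PiM) \<le>
      sqrt (\<integral>x. (smooth_box n x - smooth_trunc d x)\<^sup>2 \<partial>std_normal_PiM)"
    by (rule integral_abs_le_sqrt_integral_sq) (auto simp: i)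
  also have "(\<integral>x. (smooth_box n x - smooth_trunc d x)\<^sup>2 \<partial>std_normal_PiM) = (\<Sum>\<alpha>\<in>?B. (?a \<alpha>)\<^sup>2)"
    unfolding diff by (rule parseval_hermite_multi(2)[OF fin])
  also have "\<dots> \<le> (r ^ (d + 1))\<^sup>2"
    by (rule sum_sq_hermite_tail_le[OF fin]) (simp add: index_deg_le_def)
  finally show "(\<integral>x. \<bar>smooth_box n x - smooth_trunc d x\<bar> \<partial>std_normal_PiM) \<le> r ^ (d + 1)"
    using r_nonneg by (simp add: real_sqrt_le_iff)
qed

text \<open>The box truncations converge to \<open>smooth\<close> in \<open>L\<^sup>1\<close>, so the bound of
  \<open>integral_abs_box_minus_trunc_le\<close> passes to the limit.\<close>
lemma integral_abs_smooth_minus_trunc_le: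
  shows "integrable std_normal_PiM (\<lambda>x. smooth x - smooth_trunc d x)"
    and "(\<integral>x. \<bar>smooth x - smooth_trunc d x\<bar> \<partial>std_normal_PiM) \<le> r ^ (d + 1)"
proof -
  let ?L = "(1 / (1 - r\<^sup>2)) ^ CARD('n)"
  let ?bound = "\<lambda>n. sqrt (?L - (\<Sum>k\<le>n. (r\<^sup>2) ^ k) ^ CARD('n)) + r ^ (d + 1)"
  have split: "smooth x - smooth_trunc d x = (smooth x - smooth_box n x) + (smooth_box n x - smooth_trunc d x)"
    for x n by simp
  show "integrable std_normal_PiM (\<lambda>x. smooth x - smooth_trunc d x)"
    unfolding split[of _ d]
    by (intro Bochner_Integration.integrable_add integral_abs_smooth_minus_box_le(1)
        integral_abs_box_minus_trunc_le(1)) simp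
  have le_bound: "(\<integral>x. \<bar>smooth x - smooth_trunc d x\<bar> \<partial>std_normal_PiM) \<le> ?bound n" if "d \<le> n" for n
  proof -
    have "(\<integral>x. \<bar>smooth x - smooth_trunc d x\<bar> \<partial>std_normal_PiM) \<le>
        (\<integral>x. \<bar>smooth x - smooth_box n x\<bar> \<partial>std_normal_PiM) +
        (\<integral>x. \<bar>smooth_box n x - smooth_trunc d x\<bar> \<partial>std_normal_PiM)"
      unfolding split[of _ n]
      by (intro integral_abs_add_le integral_abs_smooth_minus_box_le(1)
          integral_abs_box_minus_trunc_le(1)[OF that])
    also have "\<dots> \<le> ?bound n"
      by (intro add_mono integral_abs_smooth_minus_box_le(2) integral_abs_box_minus_trunc_le(2)[OF that])
    finally show ?thesis .
  qed
  have "?bound \<longlonglongrightarrow> sqrt (?L - ?L) + r ^ (d + 1)"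
    using r_sq_less_1
    by (intro tendsto_intros tendsto_sum_atMost_power) simp
  then have "?bound \<longlonglongrightarrow> r ^ (d + 1)"
    by simp
  then show "(\<integral>x. \<bar>smooth x - smooth_trunc d x\<bar> \<partial>std_normal_PiM) \<le> r ^ (d + 1)"
    by (rule LIMSEQ_le_const) (use le_bound in blast)
qed

definition disagree :: "(('n \<Rightarrow> real) \<times> ('n \<Rightarrow> real)) set" where
  "disagree = {(x, z). F x \<noteq> F (\<lambda>i. r * x i + s * z i)}"

lemma disagree_sets [measurable]: "disagree \<in> sets (std_normal_PiM \<Otimes>\<^sub>M std_normal_PiM)"
proof -
  have [measurable]: "(\<lambda>p. F (\<lambda>i. r * fst p i + s * snd p i)) \<in>
      borel_measurable (std_normal_PiM \<Otimes>\<^sub>M std_normal_PiM)"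
    using F_affine_measurable by (simp add: case_prod_beta)
  have "{p \<in> space (std_normal_PiM \<Otimes>\<^sub>M std_normal_PiM). F (fst p) \<noteq> F (\<lambda>i. r * fst p i + s * snd p i)}
      \<in> sets (std_normal_PiM \<Otimes>\<^sub>M std_normal_PiM)"
    by measurable
  moreover have "disagree =
      {p \<in> space (std_normal_PiM \<Otimes>\<^sub>M std_normal_PiM). F (fst p) \<noteq> F (\<lambda>i. r * fst p i + s * snd p i)}"
    by (auto simp: disagree_def space_pair_measure)
  ultimately show ?thesis
    by simp
qed

lemma abs_F_diff: "\<bar>F x - F y\<bar> = (if F x = F y then 0 else 2)"
  using F_sign[of x] F_sign[of y] by (elim disjE) simp_all

lemma abs_F_minus_smooth_le:
  "\<bar>F x - smooth x\<bar> \<le> (\<integral>z. 2 * indicator disagree (x, z) \<partial>std_normal_PiM)"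
proof -
  interpret prob_space "std_normal_PiM :: ('n \<Rightarrow> real) measure"
    by (rule prob_space_std_normal_PiM)
  have "F x - smooth x = (\<integral>z. F x - F (\<lambda>i. r * x i + s * z i) \<partial>std_normal_PiM)"
    unfolding smooth_def using prob_space
    by (subst Bochner_Integration.integral_diff) (simp_all add: integrable_F_affine)
  then have "\<bar>F x - smooth x\<bar> \<le> (\<integral>z. \<bar>F x - F (\<lambda>i. r * x i + s * z i)\<bar> \<partial>std_normal_PiM)"
    by (simp add: integral_abs_bound)
  also have "\<dots> = (\<integral>z. 2 * indicator disagree (x, z) \<partial>std_normal_PiM)"
  proof (intro Bochner_Integration.integral_cong refl)
    fix z
    show "\<bar>F x - F (\<lambda>i. r * x i + s * z i)\<bar> = 2 * indicator disagree (x, z)"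
      unfolding abs_F_diff by (simp add: disagree_def indicator_def)
  qed
  finally show ?thesis .
qed

lemma integral_abs_F_minus_smooth_le:
  shows "integrable std_normal_PiM (\<lambda>x. F x - smooth x)"
    and "(\<integral>x. \<bar>F x - smooth x\<bar> \<partial>std_normal_PiM) \<le> 2 * measure (std_normal_PiM \<Otimes>\<^sub>M std_normal_PiM) disagree"
proof -
  interpret prob_space "std_normal_PiM :: ('n \<Rightarrow> real) measure"
    by (rule prob_space_std_normal_PiM)
  interpret pair_sigma_finite "std_normal_PiM :: ('n \<Rightarrow> real) measure" std_normal_PiM
    by (intro pair_sigma_finite.intro prob_space_imp_sigma_finite prob_space_std_normal_PiM)
  interpret PP: prob_space "std_normal_PiM \<Otimes>\<^sub>M (std_normal_PiM :: ('n \<Rightarrow> real) measure)"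
    by (intro prob_space_pair prob_space_std_normal_PiM)
  show "integrable std_normal_PiM (\<lambda>x. F x - smooth x)"
  proof (rule Bochner_Integration.integrable_bound[where f="\<lambda>_. 2 :: real"])
    have "\<bar>F x - smooth x\<bar> \<le> 2" for x
      using abs_triangle_ineq4[of "F x" "smooth x"] abs_smooth_le_1[of x] by simp
    then show "AE x in std_normal_PiM. norm (F x - smooth x) \<le> norm (2 :: real)"
      by simp
  qed simp_all
  have iE: "integrable (std_normal_PiM \<Otimes>\<^sub>M std_normal_PiM) (\<lambda>p. 2 * indicator disagree p :: real)"
    using PP.emeasure_finite[of disagree] by (intro integrable_mult_right) (simp add: less_top[symmetric])
  have "(\<integral>x. \<bar>F x - smooth x\<bar> \<partial>std_normal_PiM) \<le>
      (\<integral>x. (\<integral>z. 2 * indicator disagree (x, z) \<partial>std_normal_PiM) \<partial>std_normal_PiM)"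
  proof (rule integral_mono')
    show "integrable std_normal_PiM (\<lambda>x. \<integral>z. (2 :: real) * indicator disagree (x, z) \<partial>std_normal_PiM)"
      using integrable_fst'[OF iE] by simp
  qed (simp_all add: abs_F_minus_smooth_le del: integral_mult_right_zero)
  also have "\<dots> = (\<integral>p. 2 * indicator disagree p \<partial>(std_normal_PiM \<Otimes>\<^sub>M std_normal_PiM))"
    using integral_fst'[OF iE] by simp
  also have "\<dots> = 2 * measure (std_normal_PiM \<Otimes>\<^sub>M std_normal_PiM) disagree"
    by simp
  finally show "(\<integral>x. \<bar>F x - smooth x\<bar> \<partial>std_normal_PiM) \<le>
      2 * measure (std_normal_PiM \<Otimes>\<^sub>M std_normal_PiM) disagree" .
qed

lemma integral_abs_F_minus_trunc_le:
  shows "integrable std_normal_PiM (\<lambda>x. F x - smooth_trunc d x)"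
    and "(\<integral>x. \<bar>F x - smooth_trunc d x\<bar> \<partial>std_normal_PiM) \<le>
      2 * measure (std_normal_PiM \<Otimes>\<^sub>M std_normal_PiM) disagree + r ^ (d + 1)"
proof -
  have split: "F x - smooth_trunc d x = (F x - smooth x) + (smooth x - smooth_trunc d x)" for x
    by simp
  note i = integral_abs_F_minus_smooth_le(1) integral_abs_smooth_minus_trunc_le(1)
  show "integrable std_normal_PiM (\<lambda>x. F x - smooth_trunc d x)"
    unfolding split by (intro Bochner_Integration.integrable_add i)
  have "(\<integral>x. \<bar>F x - smooth_trunc d x\<bar> \<partial>std_normal_PiM) \<le>
      (\<integral>x. \<bar>F x - smooth x\<bar> \<partial>std_normal_PiM) + (\<integral>x. \<bar>smooth x - smooth_trunc d x\<bar> \<partial>std_normal_PiM)"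
    unfolding split by (rule integral_abs_add_le[OF i])
  also have "\<dots> \<le> 2 * measure (std_normal_PiM \<Otimes>\<^sub>M std_normal_PiM) disagree + r ^ (d + 1)"
    by (intro add_mono integral_abs_F_minus_smooth_le(2) integral_abs_smooth_minus_trunc_le(2))
  finally show "(\<integral>x. \<bar>F x - smooth_trunc d x\<bar> \<partial>std_normal_PiM) \<le>
      2 * measure (std_normal_PiM \<Otimes>\<^sub>M std_normal_PiM) disagree + r ^ (d + 1)" .
qed

end

section \<open>Polynomials of bounded total degree\<close>

lemma poly_eq_sum_atMost:
  assumes "degree (p :: 'a::comm_semiring_1 poly) \<le> D"
  shows "poly p x = (\<Sum>i\<le>D. coeff p i * x ^ i)"
proof -
  have "(\<Sum>i\<le>D. coeff p i * x ^ i) = (\<Sum>i\<le>degree p. coeff p i * x ^ i)"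
    by (rule sum.mono_neutral_right) (use assms in \<open>auto simp: coeff_eq_0\<close>)
  then show ?thesis by (simp only: poly_altdef)
qed

lemma poly_deg_le_0: "poly_deg_le d (\<lambda>_. 0)"
  unfolding poly_deg_le_def by (intro exI[of _ "{}"]) simp

lemma poly_deg_le_add:
  assumes "poly_deg_le d p" and "poly_deg_le d q"
  shows "poly_deg_le d (\<lambda>x. p x + q x)"
proof -
  let ?m = "\<lambda>\<alpha> x. \<Prod>i\<in>UNIV. (x $ i) ^ (\<alpha> i)"
  obtain A a where A: "finite A" "\<forall>\<alpha>\<in>A. (\<Sum>i\<in>UNIV. \<alpha> i) \<le> d" "\<forall>x. p x = (\<Sum>\<alpha>\<in>A. a \<alpha> * ?m \<alpha> x)"
    using assms(1) unfolding poly_deg_le_def by blast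
  obtain B b where B: "finite B" "\<forall>\<alpha>\<in>B. (\<Sum>i\<in>UNIV. \<alpha> i) \<le> d" "\<forall>x. q x = (\<Sum>\<alpha>\<in>B. b \<alpha> * ?m \<alpha> x)"
    using assms(2) unfolding poly_deg_le_def by blast
  define c where "c \<alpha> = (if \<alpha> \<in> A then a \<alpha> else 0) + (if \<alpha> \<in> B then b \<alpha> else 0)" for \<alpha>
  have "p x + q x = (\<Sum>\<alpha>\<in>A \<union> B. c \<alpha> * ?m \<alpha> x)" for x
  proof -
    have "c \<alpha> * ?m \<alpha> x = (if \<alpha> \<in> A then a \<alpha> * ?m \<alpha> x else 0) + (if \<alpha> \<in> B then b \<alpha> * ?m \<alpha> x else 0)"
      for \<alpha>
      by (simp add: c_def distrib_right)
    then have "(\<Sum>\<alpha>\<in>A \<union> B. c \<alpha> * ?m \<alpha> x) =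
        (\<Sum>\<alpha>\<in>A \<union> B. if \<alpha> \<in> A then a \<alpha> * ?m \<alpha> x else 0) +
        (\<Sum>\<alpha>\<in>A \<union> B. if \<alpha> \<in> B then b \<alpha> * ?m \<alpha> x else 0)"
      by (simp only: sum.distrib)
    also have "\<dots> = (\<Sum>\<alpha>\<in>A. a \<alpha> * ?m \<alpha> x) + (\<Sum>\<alpha>\<in>B. b \<alpha> * ?m \<alpha> x)"
      using A(1) B(1) by (simp add: sum.inter_restrict[symmetric] Int_absorb1)
    finally show ?thesis
      using A(3) B(3) by simp
  qed
  then show ?thesis
    unfolding poly_deg_le_def using A B by (intro exI[of _ "A \<union> B"] exI[of _ c]) auto
qed

lemma poly_deg_le_const_mult:
  assumes "poly_deg_le d p"
  shows "poly_deg_le d (\<lambda>x. a * p x)"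
proof -
  obtain A c where "finite A" "\<forall>\<alpha>\<in>A. (\<Sum>i\<in>UNIV. \<alpha> i) \<le> d"
    "\<forall>x. p x = (\<Sum>\<alpha>\<in>A. c \<alpha> * (\<Prod>i\<in>UNIV. (x $ i) ^ (\<alpha> i)))"
    using assms unfolding poly_deg_le_def by blast
  then show ?thesis
    unfolding poly_deg_le_def
    by (intro exI[of _ A] exI[of _ "\<lambda>\<alpha>. a * c \<alpha>"]) (simp add: sum_distrib_left mult.assoc)
qed

lemma poly_deg_le_sum:
  assumes "finite I" and "\<And>j. j \<in> I \<Longrightarrow> poly_deg_le d (p j)"
  shows "poly_deg_le d (\<lambda>x. \<Sum>j\<in>I. p j x)"
  using assms by (induction I rule: finite_induct) (simp_all add: poly_deg_le_0 poly_deg_le_add)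

lemma poly_deg_le_prod_poly:
  fixes q :: "'n::finite \<Rightarrow> real poly"
  assumes deg: "\<And>i. degree (q i) \<le> k i" and "(\<Sum>i\<in>UNIV. k i) \<le> d"
  shows "poly_deg_le d (\<lambda>x :: real ^ 'n. \<Prod>i\<in>UNIV. poly (q i) (x $ i))"
proof -
  let ?A = "PiE UNIV (\<lambda>i. {..k i})"
  have "(\<Prod>i\<in>UNIV. poly (q i) (x $ i)) =
      (\<Sum>\<beta>\<in>?A. (\<Prod>i\<in>UNIV. coeff (q i) (\<beta> i)) * (\<Prod>i\<in>UNIV. (x $ i) ^ (\<beta> i)))" for x
  proof -
    have "(\<Prod>i\<in>UNIV. poly (q i) (x $ i)) = (\<Prod>i\<in>UNIV. \<Sum>j\<le>k i. coeff (q i) j * (x $ i) ^ j)"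
      by (simp add: poly_eq_sum_atMost[OF deg])
    also have "\<dots> = (\<Sum>\<beta>\<in>?A. \<Prod>i\<in>UNIV. coeff (q i) (\<beta> i) * (x $ i) ^ (\<beta> i))"
      by (rule prod_sum_PiE) auto
    finally show ?thesis
      by (simp add: prod.distrib)
  qed
  moreover have "(\<Sum>i\<in>UNIV. \<beta> i) \<le> d" if "\<beta> \<in> ?A" for \<beta>
    using that assms(2) by (auto simp: PiE_iff intro: order_trans[OF sum_mono])
  ultimately show ?thesis
    unfolding poly_deg_le_def by (intro exI[of _ ?A]) (auto simp: finite_PiE)
qed

context mehler_sign
begin

lemma poly_deg_le_smooth_trunc: "poly_deg_le d (\<lambda>v :: real ^ 'n. smooth_trunc d (\<lambda>i. v $ i))"
  unfolding smooth_trunc_def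
proof (intro poly_deg_le_sum poly_deg_le_const_mult)
  fix \<alpha> :: "'n \<Rightarrow> nat"
  assume "\<alpha> \<in> index_deg_le d"
  moreover have "degree (smult (1 / sqrt (fact (\<alpha> i))) (hermite (\<alpha> i))) \<le> \<alpha> i" for i
    using degree_smult_le degree_hermite order_trans by blast
  ultimately show "poly_deg_le d (\<lambda>v :: real ^ 'n. hermite_multi \<alpha> (\<lambda>i. v $ i))"
    unfolding hermite_multi_def hermite_fun_eq_poly
    by (intro poly_deg_le_prod_poly[where k = \<alpha>]) (simp_all add: index_deg_le_def)
qed simp

end

section \<open>Transfer to the standard Gaussian measure on \<open>real ^ 'n\<close>\<close>

lemma borel_measurable_vec_nth [measurable]: "(\<lambda>v :: real ^ 'n. v $ i) \<in> borel_measurable borel"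
  by (intro borel_measurable_continuous_onI) (auto intro: continuous_intros)

lemma vec_nth_measurable_std_normal_PiM [measurable]:
  "(\<lambda>v :: real ^ 'n::finite. \<lambda>i. v $ i) \<in> measurable borel std_normal_PiM"
  unfolding std_normal_PiM_def
  by (rule measurable_PiM_single'[where f="\<lambda>i v. v $ i"]) (auto simp: space_PiM)

lemma vec_lambda_measurable_std_normal_PiM [measurable]:
  "(\<lambda>y. vec_lambda y :: real ^ 'n::finite) \<in> borel_measurable std_normal_PiM"
proof -
  have [measurable]: "\<And>i. (\<lambda>y :: 'n \<Rightarrow> real. y i) \<in> borel_measurable std_normal_PiM"
    unfolding std_normal_PiM_def by measurable
  have eq: "vec_lambda = (\<lambda>y. \<Sum>i\<in>UNIV. y i *\<^sub>R axis i (1 :: real) :: real ^ 'n)"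
    by (simp add: fun_eq_iff vec_eq_iff axis_def if_distrib cong: if_cong)
  show ?thesis
    unfolding eq by measurable
qed

lemma sets_std_gaussian [measurable_cong, simp]: "sets std_gaussian = sets borel"
  and space_std_gaussian [simp]: "space std_gaussian = UNIV"
  by (simp_all add: std_gaussian_def)

lemma Basis_vec_eq_range_axis: "(Basis :: (real ^ 'n) set) = range (\<lambda>i. axis i 1)"
  by (auto simp: Basis_vec_def)

lemma inj_axis_1: "inj (\<lambda>i :: 'n::finite. axis i (1 :: real))"
  by (auto intro!: injI simp: axis_eq_axis)

lemma vec_nth_sum_Basis: "(\<Sum>b\<in>Basis. f b *\<^sub>R b) $ i = f (axis i 1 :: real ^ 'n)"
proof -
  have axis_nth_if: "axis j (1 :: real) $ i = (if j = i then 1 else 0)" for j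
    by (simp add: axis_def)
  have "(\<Sum>b\<in>Basis. f b *\<^sub>R b) $ i = (\<Sum>b\<in>Basis. f b * (b $ i))"
    by simp
  also have "\<dots> = (\<Sum>b\<in>Basis. if b = axis i 1 then f b else 0)"
    by (intro sum.cong refl) (auto simp: Basis_vec_def axis_eq_axis axis_nth_if)
  also have "\<dots> = f (axis i 1)"
    by (simp add: sum.delta')
  finally show ?thesis .
qed

lemma emeasure_std_gaussian_box:
  fixes A :: "'n::finite \<Rightarrow> real set"
  assumes [measurable]: "\<And>i. A i \<in> sets borel"
  shows "emeasure (std_gaussian :: (real ^ 'n) measure) {v. \<forall>i. v $ i \<in> A i} =
    (\<Prod>i\<in>UNIV. emeasure std_normal_distribution (A i))"
proof -
  interpret L: product_sigma_finite "\<lambda>_ :: real ^ 'n. (lborel :: real measure)"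
    by (intro product_sigma_finite.intro) (rule sigma_finite_lborel)
  let ?ax = "\<lambda>i :: 'n. axis i (1 :: real)"
  define H where "H i t = ennreal (std_normal_density t) * indicator (A i) t" for i t
  have [measurable]: "\<And>i. H i \<in> borel_measurable borel"
    unfolding H_def by measurable
  have "{v :: real ^ 'n. \<forall>i. v $ i \<in> A i} \<in> sets borel"
    by measurable
  then have "emeasure (std_gaussian :: (real ^ 'n) measure) {v. \<forall>i. v $ i \<in> A i} =
      (\<integral>\<^sup>+v. (\<Prod>i\<in>UNIV. H i (v $ i)) \<partial>(lborel :: (real ^ 'n) measure))"
    unfolding std_gaussian_def
    by (subst emeasure_density) (auto intro!: nn_integral_cong simp: H_def prod.distrib prod_ennreal indicator_def)
  also have "\<dots> = (\<integral>\<^sup>+f. (\<Prod>i\<in>UNIV. H i (f (?ax i))) \<partial>PiM Basis (\<lambda>_. lborel))"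
    by (subst lborel_eq) (simp add: nn_integral_distr vec_nth_sum_Basis del: sum_component)
  also have "\<dots> = (\<integral>\<^sup>+f. (\<Prod>b\<in>Basis. H (inv ?ax b) (f b)) \<partial>PiM Basis (\<lambda>_. lborel))"
    by (simp add: Basis_vec_eq_range_axis prod.reindex[OF inj_axis_1] inv_f_f[OF inj_axis_1])
  also have "\<dots> = (\<Prod>b\<in>Basis. \<integral>\<^sup>+t. H (inv ?ax b) t \<partial>lborel)"
    by (rule L.product_nn_integral_prod) auto
  also have "\<dots> = (\<Prod>i\<in>UNIV. emeasure std_normal_distribution (A i))"
    by (simp add: Basis_vec_eq_range_axis prod.reindex[OF inj_axis_1] inv_f_f[OF inj_axis_1]
        emeasure_density H_def)
  finally show ?thesis .
qed

lemma distr_std_gaussian_vec_nth: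
  "distr (std_gaussian :: (real ^ 'n::finite) measure) std_normal_PiM (\<lambda>v i. v $ i) = std_normal_PiM"
proof -
  interpret N: product_prob_space "\<lambda>_ :: 'n. std_normal_distribution"
    by (rule product_prob_space_std_normal)
  have m: "(\<lambda>v :: real ^ 'n. \<lambda>i. v $ i) \<in> measurable std_gaussian (PiM UNIV (\<lambda>_ :: 'n. std_normal_distribution))"
    using vec_nth_measurable_std_normal_PiM unfolding std_normal_PiM_def by (simp cong: measurable_cong_sets)
  show ?thesis
    unfolding std_normal_PiM_def
  proof (rule N.PiM_eqI)
    fix A :: "'n \<Rightarrow> real set"
    assume "\<And>i. i \<in> UNIV \<Longrightarrow> A i \<in> sets std_normal_distribution"
    then have A [measurable]: "\<And>i. A i \<in> sets borel" by simp
    have "PiE UNIV A \<in> sets (PiM UNIV (\<lambda>_ :: 'n. std_normal_distribution))"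
      by (intro sets_PiM_I_finite) auto
    then have "emeasure (distr std_gaussian (PiM UNIV (\<lambda>_. std_normal_distribution)) (\<lambda>v i. v $ i)) (PiE UNIV A)
        = emeasure (std_gaussian :: (real ^ 'n) measure) {v. \<forall>i. v $ i \<in> A i}"
      by (subst emeasure_distr[OF m]) (auto intro!: arg_cong[where f="emeasure std_gaussian"] simp: PiE_iff)
    then show "emeasure (distr std_gaussian (PiM UNIV (\<lambda>_. std_normal_distribution)) (\<lambda>v i. v $ i)) (PiE UNIV A)
        = (\<Prod>i\<in>UNIV. emeasure std_normal_distribution (A i))"
      by (simp add: emeasure_std_gaussian_box)
  qed simp_all
qed

lemma std_gaussian_eq_distr: "std_gaussian = distr std_normal_PiM borel vec_lambda"
proof -
  have "distr std_normal_PiM borel vec_lambda =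
      distr (distr (std_gaussian :: (real ^ 'n) measure) std_normal_PiM (\<lambda>v i. v $ i)) borel vec_lambda"
    by (simp add: distr_std_gaussian_vec_nth)
  also have "\<dots> = distr std_gaussian borel (\<lambda>v. vec_lambda (\<lambda>i. v $ i))"
    by (subst distr_distr) (auto simp: comp_def cong: measurable_cong_sets)
  also have "\<dots> = std_gaussian"
    by (simp add: distr_id2)
  finally show ?thesis ..
qed

lemma prob_space_std_gaussian: "prob_space std_gaussian"
  unfolding std_gaussian_eq_distr
  by (rule prob_space.prob_space_distr[OF prob_space_std_normal_PiM]) simp

lemma nn_integral_std_gaussian:
  assumes [measurable]: "g \<in> borel_measurable borel"
  shows "(\<integral>\<^sup>+v. g v \<partial>std_gaussian) = (\<integral>\<^sup>+y. g (vec_lambda y) \<partial>std_normal_PiM)"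
  unfolding std_gaussian_eq_distr by (subst nn_integral_distr) auto

lemma nn_integral_std_gaussian_abs_sign:
  fixes f :: "real ^ 'n::finite \<Rightarrow> real"
  assumes "\<And>x. f x \<in> {-1, 1}"
  shows "(\<integral>\<^sup>+ x. ennreal \<bar>f x\<bar> \<partial>std_gaussian) = 1"
proof -
  interpret prob_space "std_gaussian :: (real ^ 'n) measure"
    by (rule prob_space_std_gaussian)
  have "(\<integral>\<^sup>+ x. ennreal \<bar>f x\<bar> \<partial>std_gaussian) = (\<integral>\<^sup>+ x. 1 \<partial>(std_gaussian :: (real ^ 'n) measure))"
  proof (intro nn_integral_cong)
    show "ennreal \<bar>f x\<bar> = 1" for x
      using assms[of x] by auto
  qed
  then show ?thesis
    using emeasure_space_1 by simp
qed

lemma corr_gaussian_pair_eq_distr: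
  "corr_gaussian_pair r = distr (std_normal_PiM \<Otimes>\<^sub>M std_normal_PiM) (borel \<Otimes>\<^sub>M borel)
     (\<lambda>(x, z). (vec_lambda x, r *\<^sub>R vec_lambda x + sqrt (1 - r\<^sup>2) *\<^sub>R vec_lambda z :: real ^ 'n))"
proof -
  interpret prob_space "std_normal_PiM :: ('n \<Rightarrow> real) measure"
    by (rule prob_space_std_normal_PiM)
  define g where "g = (\<lambda>(x, z). (x, r *\<^sub>R x + sqrt (1 - r\<^sup>2) *\<^sub>R z :: real ^ 'n))"
  define h where "h = (\<lambda>(x, y). (vec_lambda x :: real ^ 'n, vec_lambda y :: real ^ 'n))"
  have [measurable]: "g \<in> measurable (borel \<Otimes>\<^sub>M borel) (borel \<Otimes>\<^sub>M borel)"
    unfolding g_def by measurable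
  have [measurable]: "h \<in> measurable (std_normal_PiM \<Otimes>\<^sub>M std_normal_PiM) (borel \<Otimes>\<^sub>M borel)"
    unfolding h_def by measurable
  have "sigma_finite_measure (distr std_normal_PiM borel (vec_lambda :: _ \<Rightarrow> real ^ 'n))"
    by (intro prob_space_imp_sigma_finite prob_space_distr) simp
  then have "(std_gaussian :: (real ^ 'n) measure) \<Otimes>\<^sub>M std_gaussian =
      distr (std_normal_PiM \<Otimes>\<^sub>M std_normal_PiM) (borel \<Otimes>\<^sub>M borel) h"
    unfolding std_gaussian_eq_distr h_def by (intro pair_measure_distr) simp_all
  then have "corr_gaussian_pair r = distr (std_normal_PiM \<Otimes>\<^sub>M std_normal_PiM) (borel \<Otimes>\<^sub>M borel) (g \<circ> h)"
    unfolding corr_gaussian_pair_def g_def[symmetric] by (simp add: distr_distr)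
  then show ?thesis
    by (simp add: g_def h_def comp_def case_prod_beta')
qed

context mehler_sign
begin

lemma GNS_eq_measure_disagree:
  assumes [measurable]: "f \<in> borel_measurable borel" and F_eq: "\<And>y. F y = f (vec_lambda y)"
  shows "GNS (1 - r) f = measure (std_normal_PiM \<Otimes>\<^sub>M std_normal_PiM) disagree"
proof -
  let ?T = "\<lambda>(x, z). (vec_lambda x, r *\<^sub>R vec_lambda x + s *\<^sub>R vec_lambda z :: real ^ 'n)"
  have [measurable]: "?T \<in> measurable (std_normal_PiM \<Otimes>\<^sub>M std_normal_PiM) (borel \<Otimes>\<^sub>M borel)"
    by measurable
  have "{p \<in> space (borel \<Otimes>\<^sub>M borel :: ((real ^ 'n) \<times> (real ^ 'n)) measure). f (fst p) \<noteq> f (snd p)}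
      \<in> sets (borel \<Otimes>\<^sub>M borel)"
    by measurable
  then have [measurable]: "{(x, y). f x \<noteq> f y} \<in> sets (borel \<Otimes>\<^sub>M borel :: ((real ^ 'n) \<times> (real ^ 'n)) measure)"
    by (simp add: space_pair_measure case_prod_beta')
  have "r *\<^sub>R vec_lambda x + s *\<^sub>R vec_lambda z = (vec_lambda (\<lambda>i. r * x i + s * z i) :: real ^ 'n)" for x z
    by (simp add: vec_eq_iff)
  then have "?T -` {(x, y). f x \<noteq> f y} \<inter> space (std_normal_PiM \<Otimes>\<^sub>M std_normal_PiM) = disagree"
    by (auto simp: disagree_def F_eq space_pair_measure)
  moreover have "GNS (1 - r) f = measure (distr (std_normal_PiM \<Otimes>\<^sub>M std_normal_PiM) (borel \<Otimes>\<^sub>M borel) ?T)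
      {(x, y). f x \<noteq> f y}"
    by (simp add: GNS_def corr_gaussian_pair_eq_distr s_def)
  ultimately show ?thesis
    by (simp add: measure_distr)
qed

lemma nn_integral_std_gaussian_abs_minus_trunc_le:
  assumes [measurable]: "f \<in> borel_measurable borel" and F_eq: "\<And>y. F y = f (vec_lambda y)"
  shows "(\<integral>\<^sup>+ x. ennreal \<bar>f x - smooth_trunc d (\<lambda>i. x $ i)\<bar> \<partial>std_gaussian) \<le>
    ennreal (2 * GNS (1 - r) f + r ^ (d + 1))"
proof -
  have "(\<integral>\<^sup>+ x. ennreal \<bar>f x - smooth_trunc d (\<lambda>i. x $ i)\<bar> \<partial>std_gaussian) =
      (\<integral>\<^sup>+ y. ennreal \<bar>F y - smooth_trunc d y\<bar> \<partial>std_normal_PiM)"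
    by (subst nn_integral_std_gaussian) (auto simp: F_eq vec_lambda_inverse)
  also have "\<dots> = ennreal (\<integral> y. \<bar>F y - smooth_trunc d y\<bar> \<partial>std_normal_PiM)"
    using integral_abs_F_minus_trunc_le(1) by (intro nn_integral_eq_integral) auto
  also have "\<dots> \<le> ennreal (2 * GNS (1 - r) f + r ^ (d + 1))"
    using integral_abs_F_minus_trunc_le(2) GNS_eq_measure_disagree[OF assms]
    by (intro ennreal_leI) simp
  finally show ?thesis .
qed

end

theorem proposition1p2:
  fixes f :: "real ^ 'n \<Rightarrow> real" and \<rho> :: real and d :: nat
  assumes "f \<in> borel_measurable borel"
    and "\<And>x. f x \<in> {-1, 1}"
    and "0 \<le> \<rho>" and "\<rho> \<le> 1"
  shows "\<exists>p. poly_deg_le d p \<and>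
    (\<integral>\<^sup>+ x. ennreal \<bar>f x - p x\<bar> \<partial>std_gaussian) \<le> ennreal (2 * GNS (1 - \<rho>) f + \<rho> ^ (d + 1))"
proof (cases "\<rho> = 1")
  case True
  have "(\<integral>\<^sup>+ x. ennreal \<bar>f x - 0\<bar> \<partial>std_gaussian) = 1"
    using nn_integral_std_gaussian_abs_sign[OF assms(2)] by simp
  moreover have "0 \<le> GNS (1 - \<rho>) f"
    by (simp add: GNS_def)
  ultimately show ?thesis
    using True poly_deg_le_0 by (intro exI[of _ "\<lambda>_. 0"]) (simp add: ennreal_leI)
next
  case False
  define F where "F y = f (vec_lambda y)" for y :: "'n \<Rightarrow> real"
  note [measurable] = assms(1)
  have "F \<in> borel_measurable std_normal_PiM"
    unfolding F_def by measurable
  then interpret mehler_sign \<rho> F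
    using assms False by unfold_locales (auto simp: F_def)
  show ?thesis
    using poly_deg_le_smooth_trunc nn_integral_std_gaussian_abs_minus_trunc_le[OF assms(1)]
    by (auto simp: F_def)
qed

end
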